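(* The mapping $\psi:\mathcal{C}^3_{\rm c}\to\mathcal{C}^3_{\rm c}$ is discontinuous (with respect to $d_\infty$) at every point of a dense subset of $(\mathcal{C}^3_{\rm c},d_\infty)$.
   Context: $\mathbb{I}=[0,1]$, $\lambda$ Lebesgue measure; $d_\infty(C_1,C_2)=\max_{\mathbf{x}\in\mathbb{I}^3}|C_1(\mathbf{x})-C_2(\mathbf{x})|$. Points of $\mathbb{I}^3$ are written $(\mathbf{u},v)$, $\mathbf{u}=(u_1,u_2)$. For a three-dimensional copula $C$, $K_C$ is (a version of) the regular conditional distribution of $(U_1,U_2)$ given $U_3=v$, $(U_1,U_2,U_3)\sim C$; $F_{1|3}(u_1|t)=K_C(t,[0,u_1]\times\mathbb{I})$, $F_{2|3}(u_2|t)=K_C(t,\mathbb{I}\times[0,u_2])$. $\mathcal{C}^3_{\rm c}$ is the set of three-dimensional copulas for which $F_{1|3}(\cdot|t)$, $F_{2|3}(\cdot|t)$ are continuous for $\lambda$-a.e. $t$; for such $C$, for a.e. $t$ the conditional copula $C^t_{12;3}$ is the unique bivariate copula with $K_C(t,[\mathbf{0},\mathbf{u}])=C^t_{12;3}(F_{1|3}(u_1|t),F_{2|3}(u_2|t))$. The partial copula is $C_p(\mathbf{s})=\int_{\mathbb{I}}C^t_{12;3}(\mathbf{s})\,d\lambda(t)$ and $\psi(C)(\mathbf{u},v)=\int_{[0,v]}C_p(F_{1|3}(u_1|t),F_{2|3}(u_2|t))\,d\lambda(t)$. *)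

theory Defs
  imports "HOL-Probability.Probability"
begin

text \<open>Copulas are represented as real-valued functions; only their values on the unit
cube matter. Points of the cube are written (u1, u2, v).\<close>

definition unitI :: "real set" where "unitI = {0..1}"

definition copula2 :: "(real \<Rightarrow> real \<Rightarrow> real) \<Rightarrow> bool" where
  "copula2 D \<longleftrightarrow>
     (\<forall>s\<in>unitI. D 0 s = 0 \<and> D s 0 = 0 \<and> D s 1 = s \<and> D 1 s = s) \<and>
     (\<forall>a1\<in>unitI. \<forall>b1\<in>unitI. \<forall>a2\<in>unitI. \<forall>b2\<in>unitI. a1 \<le> b1 \<longrightarrow> a2 \<le> b2 \<longrightarrow>
        D b1 b2 - D a1 b2 - D b1 a2 + D a1 a2 \<ge> 0)"

definition copula3 :: "(real \<Rightarrow> real \<Rightarrow> real \<Rightarrow> real) \<Rightarrow> bool" where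
  "copula3 C \<longleftrightarrow>
     (\<forall>x\<in>unitI. \<forall>y\<in>unitI. C 0 x y = 0 \<and> C x 0 y = 0 \<and> C x y 0 = 0) \<and>
     (\<forall>s\<in>unitI. C s 1 1 = s \<and> C 1 s 1 = s \<and> C 1 1 s = s) \<and>
     (\<forall>a1\<in>unitI. \<forall>b1\<in>unitI. \<forall>a2\<in>unitI. \<forall>b2\<in>unitI. \<forall>a3\<in>unitI. \<forall>b3\<in>unitI.
        a1 \<le> b1 \<longrightarrow> a2 \<le> b2 \<longrightarrow> a3 \<le> b3 \<longrightarrow>
        C b1 b2 b3 - C a1 b2 b3 - C b1 a2 b3 - C b1 b2 a3
          + C a1 a2 b3 + C a1 b2 a3 + C b1 a2 a3 - C a1 a2 a3 \<ge> 0)"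

definition dinf :: "(real \<Rightarrow> real \<Rightarrow> real \<Rightarrow> real) \<Rightarrow> (real \<Rightarrow> real \<Rightarrow> real \<Rightarrow> real) \<Rightarrow> real" where
  "dinf C1 C2 = (SUP x \<in> unitI \<times> unitI \<times> unitI.
      \<bar>C1 (fst x) (fst (snd x)) (snd (snd x)) - C2 (fst x) (fst (snd x)) (snd (snd x))\<bar>)"

definition markov_kernel :: "(real \<Rightarrow> (real \<times> real) measure) \<Rightarrow> bool" where
  "markov_kernel K \<longleftrightarrow>
     (\<forall>t. prob_space (K t) \<and> sets (K t) = sets (borel :: (real \<times> real) measure)) \<and>
     (\<forall>E \<in> sets (borel :: (real \<times> real) measure). (\<lambda>t. measure (K t) E) \<in> borel_measurable lborel)"

text \<open>K is a version of the regular conditional distribution of (U1,U2) given U3 = t,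
  where (U1,U2,U3) ~ C.  (The rectangle identity determines K up to a null set of t.)\<close>
definition is_rcd :: "(real \<Rightarrow> real \<Rightarrow> real \<Rightarrow> real) \<Rightarrow> (real \<Rightarrow> (real \<times> real) measure) \<Rightarrow> bool" where
  "is_rcd C K \<longleftrightarrow> markov_kernel K \<and>
     (\<forall>u1\<in>unitI. \<forall>u2\<in>unitI. \<forall>v\<in>unitI.
        C u1 u2 v = (LINT t:{0..v}|lborel. measure (K t) ({0..u1} \<times> {0..u2})))"

definition KC :: "(real \<Rightarrow> real \<Rightarrow> real \<Rightarrow> real) \<Rightarrow> real \<Rightarrow> (real \<times> real) measure" where
  "KC C = (SOME K. is_rcd C K)"

definition F13 :: "(real \<Rightarrow> real \<Rightarrow> real \<Rightarrow> real) \<Rightarrow> real \<Rightarrow> real \<Rightarrow> real" where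
  "F13 C u1 t = measure (KC C t) ({0..u1} \<times> {0..1})"

definition F23 :: "(real \<Rightarrow> real \<Rightarrow> real \<Rightarrow> real) \<Rightarrow> real \<Rightarrow> real \<Rightarrow> real" where
  "F23 C u2 t = measure (KC C t) ({0..1} \<times> {0..u2})"

definition Cc :: "(real \<Rightarrow> real \<Rightarrow> real \<Rightarrow> real) set" where
  "Cc = {C. copula3 C \<and> (\<exists>K. is_rcd C K \<and>
      (AE t in lborel. t \<in> unitI \<longrightarrow>
         continuous_on UNIV (\<lambda>u. measure (K t) ({0..u} \<times> {0..1})) \<and>
         continuous_on UNIV (\<lambda>u. measure (K t) ({0..1} \<times> {0..u}))))}"

text \<open>Conditional copula C^t_{12;3} (unique for a.e. t when C is in C^3_c).\<close>
definition condcop :: "(real \<Rightarrow> real \<Rightarrow> real \<Rightarrow> real) \<Rightarrow> real \<Rightarrow> real \<Rightarrow> real \<Rightarrow> real" where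
  "condcop C t = (SOME D. copula2 D \<and>
      (\<forall>u1\<in>unitI. \<forall>u2\<in>unitI.
         measure (KC C t) ({0..u1} \<times> {0..u2}) = D (F13 C u1 t) (F23 C u2 t)))"

definition partial_copula :: "(real \<Rightarrow> real \<Rightarrow> real \<Rightarrow> real) \<Rightarrow> real \<Rightarrow> real \<Rightarrow> real" where
  "partial_copula C s1 s2 = (LINT t:unitI|lebesgue. condcop C t s1 s2)"

definition psi :: "(real \<Rightarrow> real \<Rightarrow> real \<Rightarrow> real) \<Rightarrow> real \<Rightarrow> real \<Rightarrow> real \<Rightarrow> real" where
  "psi C u1 u2 v = (LINT t:{0..v}|lebesgue. partial_copula C (F13 C u1 t) (F23 C u2 t))"

end

theory Submission
  imports Defs
begin

text \<open>Every copula in \<^term>\<open>Cc\<close> is uniformly close to a grid copula E: cut the cube into \<open>n\<^sup>3\<close>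
  cells and spread the mass the copula gives to each cell over the diagonals of the cell's square,
  along the Frechet bound M during the first half of the cell's time slot and along W during the
  second. E agrees with the copula on the grid, hence differs from it by at most \<open>3/n\<close>.

  At every such E, \<^term>\<open>psi\<close> is discontinuous. Replace, in every cell, the M-diagonal of the square
  by \<open>2 M\<close> alternating M-diagonals of its lower left and upper right quarters; the resulting copulas F
  satisfy \<open>dinf E F \<le> 1/(8 M)\<close>. All conditional copulas of E and F are M or W with the same weights,
  so both have the partial copula \<open>(M + W)/2\<close>, but the conditional margins of F are twice as steep.
  At the centre of a square carrying mass this makes \<^term>\<open>psi\<close> of F exceed \<^term>\<open>psi\<close> of E by
  an eighth of that mass, whatever \<open>M\<close> is.\<close>

section \<open>Uniform distributions on diagonals\<close>

definition clamp01 :: "real \<Rightarrow> real" where "clamp01 z = max 0 (min 1 z)"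

lemma clamp01_bounds: "0 \<le> clamp01 z" "clamp01 z \<le> 1"
  by (auto simp: clamp01_def)

lemma clamp01_mono: "x \<le> y \<Longrightarrow> clamp01 x \<le> clamp01 y"
  by (auto simp: clamp01_def)

lemma clamp01_id: "0 \<le> z \<Longrightarrow> z \<le> 1 \<Longrightarrow> clamp01 z = z"
  by (auto simp: clamp01_def)

lemma continuous_on_clamp01: "continuous_on UNIV f \<Longrightarrow> continuous_on UNIV (\<lambda>u. clamp01 (f u))"
  unfolding clamp01_def by (intro continuous_intros)

text \<open>\<^term>\<open>frechet True\<close> is the upper Frechet bound M, \<^term>\<open>frechet False\<close> the lower one W.\<close>
definition frechet :: "bool \<Rightarrow> real \<Rightarrow> real \<Rightarrow> real" where
  "frechet up s1 s2 = (if up then min s1 s2 else max 0 (s1 + s2 - 1))"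

lemma frechet_bounds: "s1 \<in> {0..1} \<Longrightarrow> s2 \<in> {0..1} \<Longrightarrow> 0 \<le> frechet up s1 s2 \<and> frechet up s1 s2 \<le> 1"
  by (auto simp: frechet_def)

lemma frechet_2increasing:
  "x \<le> x' \<Longrightarrow> y \<le> y' \<Longrightarrow> 0 \<le> frechet up x' y' - frechet up x y' - frechet up x' y + frechet up x y"
  by (auto simp: frechet_def max_def min_def)

lemma copula2_frechet: "copula2 (frechet up)"
  unfolding copula2_def unitI_def by (auto simp: frechet_def intro: frechet_2increasing)

text \<open>\<^term>\<open>Seg x w y h up\<close> stands for the uniform distribution on the diagonal of the rectangle
  \<open>[x, x + w] \<times> [y, y + h]\<close>: the increasing diagonal if \<open>up\<close>, the decreasing one otherwise.\<close>
datatype seg = Seg (seg_x: real) (seg_w: real) (seg_y: real) (seg_h: real) (seg_up: bool)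

definition valid_seg :: "seg \<Rightarrow> bool" where
  "valid_seg s \<longleftrightarrow> 0 \<le> seg_x s \<and> 0 < seg_w s \<and> seg_x s + seg_w s \<le> 1 \<and>
                   0 \<le> seg_y s \<and> 0 < seg_h s \<and> seg_y s + seg_h s \<le> 1"

definition seg_param :: "seg \<Rightarrow> real \<Rightarrow> real \<times> real" where
  "seg_param s x = (seg_x s + seg_w s * x,
     if seg_up s then seg_y s + seg_h s * x else seg_y s + seg_h s - seg_h s * x)"

definition seg_measure :: "seg \<Rightarrow> (real \<times> real) measure" where
  "seg_measure s = distr (uniform_measure lborel {0..1}) borel (seg_param s)"

definition seg_cdf1 :: "seg \<Rightarrow> real \<Rightarrow> real" where
  "seg_cdf1 s u = clamp01 ((u - seg_x s) / seg_w s)"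

definition seg_cdf2 :: "seg \<Rightarrow> real \<Rightarrow> real" where
  "seg_cdf2 s u = clamp01 ((u - seg_y s) / seg_h s)"

definition seg_cdf :: "seg \<Rightarrow> real \<Rightarrow> real \<Rightarrow> real" where
  "seg_cdf s u1 u2 = frechet (seg_up s) (seg_cdf1 s u1) (seg_cdf2 s u2)"

lemma seg_param_measurable[measurable]: "seg_param s \<in> borel_measurable borel"
  by (rule borel_measurable_continuous_onI)
     (cases "seg_up s"; auto simp: seg_param_def intro!: continuous_intros)

lemma sets_seg_measure[simp]: "sets (seg_measure s) = sets borel"
  by (simp add: seg_measure_def)

lemma prob_space_seg_measure: "prob_space (seg_measure s)"
  unfolding seg_measure_def
  by (intro prob_space.prob_space_distr prob_space_uniform_measure) auto

lemma measure_seg_measure: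
  assumes A: "A \<in> sets borel"
  shows "measure (seg_measure s) A = measure lborel ({0..1} \<inter> seg_param s -` A)"
proof -
  have "measure (seg_measure s) A = measure (uniform_measure lborel {0..1}) (seg_param s -` A)"
    unfolding seg_measure_def by (subst measure_distr) (use A in auto)
  also have "\<dots> = measure lborel ({0..1} \<inter> seg_param s -` A)"
    using measurable_sets_borel[OF seg_param_measurable A]
    by (subst measure_uniform_measure) (auto simp: Int_commute)
  finally show ?thesis .
qed

lemma increasing_diagonal_preimage:
  fixes a h b k :: real
  assumes "0 \<le> a" "0 < h" "0 \<le> b" "0 < k"
  shows "{0..1} \<inter> {x. a + h * x \<in> {0..u1} \<and> b + k * x \<in> {0..u2}}
       = {0 .. min 1 (min ((u1 - a) / h) ((u2 - b) / k))}"
proof -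
  have "a + h * x \<le> u1 \<longleftrightarrow> x \<le> (u1 - a) / h" "b + k * x \<le> u2 \<longleftrightarrow> x \<le> (u2 - b) / k" for x
    using assms by (simp_all add: field_simps)
  then show ?thesis using assms by auto
qed

lemma decreasing_diagonal_preimage:
  fixes a h b k :: real
  assumes "0 \<le> a" "0 < h" "0 \<le> b" "0 < k"
  shows "{0..1} \<inter> {x. a + h * x \<in> {0..u1} \<and> b + k - k * x \<in> {0..u2}}
       = {max 0 (1 - (u2 - b) / k) .. min 1 ((u1 - a) / h)}"
proof -
  have "a + h * x \<le> u1 \<longleftrightarrow> x \<le> (u1 - a) / h" "b + k - k * x \<le> u2 \<longleftrightarrow> 1 - (u2 - b) / k \<le> x" for x
    using assms by (simp_all add: field_simps)
  moreover have "x \<le> 1 \<Longrightarrow> 0 \<le> b + k - k * x" for x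
    using assms by (smt (verit) mult_left_le)
  ultimately show ?thesis using assms by auto
qed

lemma rect_borel: "{0..a::real} \<times> {0..b::real} \<in> sets borel"
  by (intro borel_closed closed_Times) auto

lemma measure_seg_measure_rect:
  assumes s: "valid_seg s"
  shows "measure (seg_measure s) ({0..u1} \<times> {0..u2}) = seg_cdf s u1 u2"
proof -
  have pos: "0 \<le> seg_x s" "0 < seg_w s" "0 \<le> seg_y s" "0 < seg_h s"
    using s by (auto simp: valid_seg_def)
  have "measure (seg_measure s) ({0..u1} \<times> {0..u2})
      = measure lborel ({0..1} \<inter> {x. fst (seg_param s x) \<in> {0..u1} \<and> snd (seg_param s x) \<in> {0..u2}})"
    by (subst measure_seg_measure[OF rect_borel]) (auto simp: mem_Times_iff vimage_def)
  also have "\<dots> = seg_cdf s u1 u2"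
  proof (cases "seg_up s")
    case True
    then show ?thesis
      using increasing_diagonal_preimage[OF pos, of u1 u2]
      by (simp add: seg_param_def seg_cdf_def frechet_def seg_cdf1_def seg_cdf2_def clamp01_def max_def min_def)
  next
    case False
    then show ?thesis
      using decreasing_diagonal_preimage[OF pos, of u1 u2]
      by (simp add: seg_param_def seg_cdf_def frechet_def seg_cdf1_def seg_cdf2_def clamp01_def max_def min_def)
  qed
  finally show ?thesis .
qed

context
  fixes s :: seg
  assumes s: "valid_seg s"
begin

lemma seg_cdf1_bounds: "0 \<le> seg_cdf1 s u" "seg_cdf1 s u \<le> 1"
  and seg_cdf2_bounds: "0 \<le> seg_cdf2 s u" "seg_cdf2 s u \<le> 1"
  by (simp_all add: seg_cdf1_def seg_cdf2_def clamp01_bounds)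

lemma seg_cdf1_0: "seg_cdf1 s 0 = 0" and seg_cdf2_0: "seg_cdf2 s 0 = 0"
  and seg_cdf1_1: "seg_cdf1 s 1 = 1" and seg_cdf2_1: "seg_cdf2 s 1 = 1"
  using s by (auto simp: seg_cdf1_def seg_cdf2_def clamp01_def valid_seg_def field_simps)

lemma seg_cdf1_mono: "x \<le> y \<Longrightarrow> seg_cdf1 s x \<le> seg_cdf1 s y"
  and seg_cdf2_mono: "x \<le> y \<Longrightarrow> seg_cdf2 s x \<le> seg_cdf2 s y"
  using s unfolding seg_cdf1_def seg_cdf2_def valid_seg_def
  by (auto intro!: clamp01_mono divide_right_mono)

lemma continuous_on_seg_cdf1: "continuous_on UNIV (seg_cdf1 s)"
  and continuous_on_seg_cdf2: "continuous_on UNIV (seg_cdf2 s)"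
  using s unfolding seg_cdf1_def[abs_def] seg_cdf2_def[abs_def] valid_seg_def
  by (auto intro!: continuous_on_clamp01 continuous_intros)

lemma seg_cdf_bounds: "0 \<le> seg_cdf s u1 u2" "seg_cdf s u1 u2 \<le> 1"
  using frechet_bounds seg_cdf1_bounds seg_cdf2_bounds by (auto simp: seg_cdf_def)

lemma seg_cdf_0_left: "seg_cdf s 0 u = 0" and seg_cdf_0_right: "seg_cdf s u 0 = 0"
  and seg_cdf_1_left: "seg_cdf s 1 u = seg_cdf2 s u" and seg_cdf_1_right: "seg_cdf s u 1 = seg_cdf1 s u"
  using seg_cdf1_bounds seg_cdf2_bounds
  by (auto simp: seg_cdf_def seg_cdf1_0 seg_cdf2_0 seg_cdf1_1 seg_cdf2_1 frechet_def)

lemma seg_cdf_2increasing: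
  "a1 \<le> b1 \<Longrightarrow> a2 \<le> b2 \<Longrightarrow> 0 \<le> seg_cdf s b1 b2 - seg_cdf s a1 b2 - seg_cdf s b1 a2 + seg_cdf s a1 a2"
  unfolding seg_cdf_def by (intro frechet_2increasing seg_cdf1_mono seg_cdf2_mono)

lemma seg_cdf1_surj:
  assumes "s1 \<in> {0..1}"
  shows "seg_x s + seg_w s * s1 \<in> {0..1}" "seg_cdf1 s (seg_x s + seg_w s * s1) = s1"
proof -
  have "seg_w s * s1 \<le> seg_w s" using assms s by (intro mult_left_le) (auto simp: valid_seg_def)
  then have "seg_x s + seg_w s * s1 \<le> 1" using s unfolding valid_seg_def by linarith
  then show "seg_x s + seg_w s * s1 \<in> {0..1}" "seg_cdf1 s (seg_x s + seg_w s * s1) = s1"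
    using assms s by (auto simp: valid_seg_def seg_cdf1_def clamp01_id)
qed

lemma seg_cdf2_surj:
  assumes "s2 \<in> {0..1}"
  shows "seg_y s + seg_h s * s2 \<in> {0..1}" "seg_cdf2 s (seg_y s + seg_h s * s2) = s2"
proof -
  have "seg_h s * s2 \<le> seg_h s" using assms s by (intro mult_left_le) (auto simp: valid_seg_def)
  then have "seg_y s + seg_h s * s2 \<le> 1" using s unfolding valid_seg_def by linarith
  then show "seg_y s + seg_h s * s2 \<in> {0..1}" "seg_cdf2 s (seg_y s + seg_h s * s2) = s2"
    using assms s by (auto simp: valid_seg_def seg_cdf2_def clamp01_id)
qed

end

section \<open>Three-dimensional copulas and the sup distance\<close>

lemma unitI_0_1: "0 \<in> unitI" "1 \<in> unitI"
  by (auto simp: unitI_def)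

context
  fixes C :: "real \<Rightarrow> real \<Rightarrow> real \<Rightarrow> real"
  assumes C: "copula3 C"
begin

lemma copula3_grounded: "x \<in> unitI \<Longrightarrow> y \<in> unitI \<Longrightarrow> C 0 x y = 0 \<and> C x 0 y = 0 \<and> C x y 0 = 0"
  using C unfolding copula3_def by blast

lemma copula3_margins: "s \<in> unitI \<Longrightarrow> C s 1 1 = s \<and> C 1 s 1 = s \<and> C 1 1 s = s"
  using C unfolding copula3_def by blast

lemma copula3_volume_nonneg:
  "a1 \<in> unitI \<Longrightarrow> b1 \<in> unitI \<Longrightarrow> a2 \<in> unitI \<Longrightarrow> b2 \<in> unitI \<Longrightarrow> a3 \<in> unitI \<Longrightarrow> b3 \<in> unitI \<Longrightarrow>
   a1 \<le> b1 \<Longrightarrow> a2 \<le> b2 \<Longrightarrow> a3 \<le> b3 \<Longrightarrow>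
   C b1 b2 b3 - C a1 b2 b3 - C b1 a2 b3 - C b1 b2 a3 + C a1 a2 b3 + C a1 b2 a3 + C b1 a2 a3 - C a1 a2 a3 \<ge> 0"
  using C unfolding copula3_def by blast

text \<open>Each one-coordinate increment is the volume of a box, and is bounded by the volume of the
  slab it lies in, which the margins evaluate to the length of the increment.\<close>
lemma copula3_increment1:
  assumes "x \<in> unitI" "x' \<in> unitI" "y \<in> unitI" "z \<in> unitI" "x \<le> x'"
  shows "0 \<le> C x' y z - C x y z \<and> C x' y z - C x y z \<le> x' - x"
proof -
  have y: "0 \<le> y" "y \<le> 1" and z: "0 \<le> z" "z \<le> 1" using assms by (auto simp: unitI_def)
  have "C x' y z - C x y z - C x' 0 z - C x' y 0 + C x 0 z + C x y 0 + C x' 0 0 - C x 0 0 \<ge> 0"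
    "C x' 1 z - C x 1 z - C x' y z - C x' 1 0 + C x y z + C x 1 0 + C x' y 0 - C x y 0 \<ge> 0"
    "C x' 1 1 - C x 1 1 - C x' 0 1 - C x' 1 z + C x 0 1 + C x 1 z + C x' 0 z - C x 0 z \<ge> 0"
    using assms y z unitI_0_1 by (intro copula3_volume_nonneg; simp)+
  then show ?thesis using assms copula3_grounded copula3_margins unitI_0_1 by simp
qed

lemma copula3_increment2:
  assumes "x \<in> unitI" "y \<in> unitI" "y' \<in> unitI" "z \<in> unitI" "y \<le> y'"
  shows "0 \<le> C x y' z - C x y z \<and> C x y' z - C x y z \<le> y' - y"
proof -
  have x: "0 \<le> x" "x \<le> 1" and z: "0 \<le> z" "z \<le> 1" using assms by (auto simp: unitI_def)
  have "C x y' z - C 0 y' z - C x y z - C x y' 0 + C 0 y z + C 0 y' 0 + C x y 0 - C 0 y 0 \<ge> 0"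
    "C 1 y' z - C x y' z - C 1 y z - C 1 y' 0 + C x y z + C x y' 0 + C 1 y 0 - C x y 0 \<ge> 0"
    "C 1 y' 1 - C 0 y' 1 - C 1 y 1 - C 1 y' z + C 0 y 1 + C 0 y' z + C 1 y z - C 0 y z \<ge> 0"
    using assms x z unitI_0_1 by (intro copula3_volume_nonneg; simp)+
  then show ?thesis using assms copula3_grounded copula3_margins unitI_0_1 by simp
qed

lemma copula3_increment3:
  assumes "x \<in> unitI" "y \<in> unitI" "z \<in> unitI" "z' \<in> unitI" "z \<le> z'"
  shows "0 \<le> C x y z' - C x y z \<and> C x y z' - C x y z \<le> z' - z"
proof -
  have x: "0 \<le> x" "x \<le> 1" and y: "0 \<le> y" "y \<le> 1" using assms by (auto simp: unitI_def)
  have "C x y z' - C 0 y z' - C x 0 z' - C x y z + C 0 0 z' + C 0 y z + C x 0 z - C 0 0 z \<ge> 0"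
    "C 1 y z' - C x y z' - C 1 0 z' - C 1 y z + C x 0 z' + C x y z + C 1 0 z - C x 0 z \<ge> 0"
    "C 1 1 z' - C 0 1 z' - C 1 y z' - C 1 1 z + C 0 y z' + C 0 1 z + C 1 y z - C 0 y z \<ge> 0"
    using assms x y unitI_0_1 by (intro copula3_volume_nonneg; simp)+
  then show ?thesis using assms copula3_grounded copula3_margins unitI_0_1 by simp
qed

lemma copula3_mono_lipschitz:
  assumes "x \<in> unitI" "y \<in> unitI" "z \<in> unitI" "x' \<in> unitI" "y' \<in> unitI" "z' \<in> unitI"
    and "x \<le> x'" "y \<le> y'" "z \<le> z'"
  shows "C x y z \<le> C x' y' z'" "C x' y' z' - C x y z \<le> (x' - x) + (y' - y) + (z' - z)"
  using copula3_increment1[of x x' y z] copula3_increment2[of x' y y' z] copula3_increment3[of x' y' z z']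
    assms by linarith+

end

lemma dinf_leI:
  assumes "\<And>x y z. x \<in> unitI \<Longrightarrow> y \<in> unitI \<Longrightarrow> z \<in> unitI \<Longrightarrow> \<bar>A x y z - B x y z\<bar> \<le> c"
  shows "dinf A B \<le> c"
  unfolding dinf_def using assms by (intro cSUP_least) (auto simp: unitI_def)

lemma abs_le_dinf:
  assumes bounded: "\<And>x y z. x \<in> unitI \<Longrightarrow> y \<in> unitI \<Longrightarrow> z \<in> unitI \<Longrightarrow> \<bar>A x y z - B x y z\<bar> \<le> K"
    and "x \<in> unitI" "y \<in> unitI" "z \<in> unitI"
  shows "\<bar>A x y z - B x y z\<bar> \<le> dinf A B"
proof -
  let ?f = "\<lambda>p. \<bar>A (fst p) (fst (snd p)) (snd (snd p)) - B (fst p) (fst (snd p)) (snd (snd p))\<bar>"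
  have "bdd_above (?f ` (unitI \<times> unitI \<times> unitI))"
    using bounded by (intro bdd_aboveI[of _ K]) auto
  then have "?f (x, y, z) \<le> (SUP p \<in> unitI \<times> unitI \<times> unitI. ?f p)"
    by (rule cSUP_upper2[where x = "(x, y, z)"]) (use assms in auto)
  then show ?thesis by (simp add: dinf_def)
qed

section \<open>Almost everywhere uniqueness of conditional distributions\<close>

lemma integrable_unit_indicator_mult:
  fixes h :: "real \<Rightarrow> real"
  assumes [measurable]: "A \<in> sets borel" "h \<in> borel_measurable borel" and h: "\<And>t. \<bar>h t\<bar> \<le> 1"
  shows "integrable lborel (\<lambda>t. indicator ({0..1} \<inter> A) t * h t)"
proof (rule Bochner_Integration.integrable_bound)
  show "integrable lborel (indicator {0..1::real} :: real \<Rightarrow> real)"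
    by (simp add: emeasure_lborel_Icc_eq)
  show "AE t in lborel. norm (indicator ({0..1} \<inter> A) t * h t) \<le> norm (indicator {0..1::real} t :: real)"
    using h by (auto simp: indicator_def abs_mult)
qed measurable

lemma unit_tail_integrals_eq:
  fixes f g :: "real \<Rightarrow> real"
  assumes [measurable]: "f \<in> borel_measurable borel" "g \<in> borel_measurable borel"
    and f: "\<And>t. \<bar>f t\<bar> \<le> 1" and g: "\<And>t. \<bar>g t\<bar> \<le> 1"
    and eq: "\<And>v. v \<in> {0..1} \<Longrightarrow> (LINT t:{0..v}|lborel. f t) = (LINT t:{0..v}|lborel. g t)"
  shows "(LINT t|lborel. indicator ({0..1} \<inter> {x<..}) t * f t)
       = (LINT t|lborel. indicator ({0..1} \<inter> {x<..}) t * g t)"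
proof -
  consider "x < 0" | "1 \<le> x" | "0 \<le> x" "x < 1" by linarith
  then show ?thesis
  proof cases
    case 1
    then have "indicator ({0..1} \<inter> {x<..}) = (indicator {0..1} :: real \<Rightarrow> real)"
      by (auto simp: indicator_def)
    then show ?thesis using eq[of 1] by (simp add: set_lebesgue_integral_def)
  next
    case 2
    then have "indicator ({0..1} \<inter> {x<..}) = (\<lambda>_. 0 :: real)"
      by (auto simp: indicator_def)
    then show ?thesis by simp
  next
    case 3
    have split: "(LINT t|lborel. indicator ({0..1} \<inter> {x<..}) t * h t)
        = (LINT t:{0..1}|lborel. h t) - (LINT t:{0..x}|lborel. h t)"
      if [measurable]: "h \<in> borel_measurable borel" and h: "\<And>t. \<bar>h t\<bar> \<le> 1" for h :: "real \<Rightarrow> real"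
    proof -
      have "indicator ({0..1} \<inter> {x<..}) t * h t = indicator ({0..1} \<inter> UNIV) t * h t - indicator ({0..1} \<inter> {0..x}) t * h t" for t
        using 3 by (auto simp: indicator_def)
      then have "(LINT t|lborel. indicator ({0..1} \<inter> {x<..}) t * h t)
          = (LINT t|lborel. indicator ({0..1} \<inter> UNIV) t * h t) - (LINT t|lborel. indicator ({0..1} \<inter> {0..x}) t * h t)"
        by (simp only:) (intro Bochner_Integration.integral_diff integrable_unit_indicator_mult; use h in simp)
      moreover have "{0..1} \<inter> {0..x} = {0..x}" using 3 by auto
      ultimately show ?thesis by (simp only: set_lebesgue_integral_def Int_UNIV_right real_scaleR_def mult.commute)
    qed
    show ?thesis using eq[of 1] eq[of x] 3 f g by (simp add: split)
  qed
qed

lemma emeasure_density_unit_tail: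
  fixes f :: "real \<Rightarrow> real"
  assumes [measurable]: "f \<in> borel_measurable borel" and f: "\<And>t. 0 \<le> f t \<and> f t \<le> 1"
  shows "emeasure (density lborel (\<lambda>t. ennreal (indicator {0..1} t * f t))) {x<..}
       = ennreal (LINT t|lborel. indicator ({0..1} \<inter> {x<..}) t * f t)"
proof -
  have "emeasure (density lborel (\<lambda>t. ennreal (indicator {0..1} t * f t))) {x<..}
      = (\<integral>\<^sup>+ t. ennreal (indicator ({0..1} \<inter> {x<..}) t * f t) \<partial>lborel)"
    by (subst emeasure_density) (auto intro!: nn_integral_cong simp: indicator_def)
  also have "\<dots> = ennreal (LINT t|lborel. indicator ({0..1} \<inter> {x<..}) t * f t)"
    using f by (intro nn_integral_eq_integral integrable_unit_indicator_mult) auto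
  finally show ?thesis .
qed

text \<open>The integrals over all \<open>[0, v]\<close> determine the finite measures with densities \<open>f\<close> and \<open>g\<close>
  on \<open>[0, 1]\<close>, and a density is determined almost everywhere by its measure.\<close>
lemma AE_eq_if_Icc_integrals_eq:
  fixes f g :: "real \<Rightarrow> real"
  assumes [measurable]: "f \<in> borel_measurable borel" "g \<in> borel_measurable borel"
    and f: "\<And>t. 0 \<le> f t \<and> f t \<le> 1" and g: "\<And>t. 0 \<le> g t \<and> g t \<le> 1"
    and eq: "\<And>v. v \<in> {0..1} \<Longrightarrow> (LINT t:{0..v}|lborel. f t) = (LINT t:{0..v}|lborel. g t)"
  shows "AE t in lborel. t \<in> {0..1} \<longrightarrow> f t = g t"
proof -
  have tails: "(LINT t|lborel. indicator ({0..1} \<inter> {x<..}) t * f t)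
       = (LINT t|lborel. indicator ({0..1} \<inter> {x<..}) t * g t)" for x
    using f g eq by (intro unit_tail_integrals_eq) (auto simp: abs_le_iff)
  have "density lborel (\<lambda>t. ennreal (indicator {0..1} t * f t))
      = density lborel (\<lambda>t. ennreal (indicator {0..1} t * g t))"
    by (rule measure_eqI_lessThan) (auto simp: emeasure_density_unit_tail f g tails)
  then have "AE t in lborel. ennreal (indicator {0..1} t * f t) = ennreal (indicator {0..1} t * g t)"
    by (intro sigma_finite_measure.density_unique[OF sigma_finite_lborel]) auto
  then show ?thesis
    by (rule AE_mp) (use f g in \<open>auto simp: indicator_def\<close>)
qed

lemma rat_decseq_Inter_Icc:
  fixes u :: real
  assumes u: "u \<in> {0..1}"
  obtains r where "\<And>i. r i \<in> \<rat> \<inter> {0..1}" "decseq r" "(\<Inter>i. {0..r i}) = {0..u}"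
proof -
  have "\<exists>q\<in>\<rat>. u + (1/2)^Suc i < q \<and> q < u + (1/2)^i" for i
    using Rats_dense_in_real[of "u + (1/2)^Suc i" "u + (1/2)^i"] by simp
  then obtain q where q: "\<And>i. q i \<in> \<rat>" "\<And>i. u + (1/2)^Suc i < q i" "\<And>i. q i < u + (1/2)^i"
    by metis
  have qu: "u < q i" for i
    using q(2)[of i] zero_less_power[of "1/2::real" "Suc i"] by linarith
  define r where "r i = min 1 (q i)" for i
  have "r i \<in> \<rat> \<inter> {0..1}" for i
    using q(1)[of i] qu[of i] u by (auto simp: r_def min_def)
  moreover have "decseq r"
  proof (rule decseq_SucI)
    fix i
    have "q (Suc i) \<le> q i" using q(3)[of "Suc i"] q(2)[of i] by simp
    then show "r (Suc i) \<le> r i" by (simp add: r_def)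
  qed
  moreover have "(\<Inter>i. {0..r i}) = {0..u}"
  proof (intro equalityI subsetI)
    fix x assume x: "x \<in> (\<Inter>i. {0..r i})"
    have "x \<le> u"
    proof (rule ccontr)
      assume "\<not> x \<le> u"
      then obtain i where i: "(1/2::real)^i < x - u" using real_arch_pow_inv[of "x - u" "1/2"] by auto
      have "x \<le> q i" using x by (auto simp: r_def)
      then show False using q(3)[of i] i by simp
    qed
    then show "x \<in> {0..u}" using x by auto
  next
    fix x assume "x \<in> {0..u}"
    then show "x \<in> (\<Inter>i. {0..r i})" using qu u by (auto simp: r_def) (smt (verit) qu)
  qed
  ultimately show ?thesis using that by blast
qed

lemma markov_kernel_measurable:
  "markov_kernel K \<Longrightarrow> E \<in> sets borel \<Longrightarrow> (\<lambda>t. measure (K t) E) \<in> borel_measurable borel"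
  unfolding markov_kernel_def by simp

lemma markov_kernel_prob_space:
  assumes "markov_kernel K"
  shows "prob_space (K t)" "sets (K t) = sets borel"
  using assms unfolding markov_kernel_def by auto

lemma is_rcd_AE_rect_eq:
  assumes "is_rcd C K1" "is_rcd C K2" "u1 \<in> {0..1}" "u2 \<in> {0..1}"
  shows "AE t in lborel. t \<in> {0..1} \<longrightarrow> measure (K1 t) ({0..u1} \<times> {0..u2}) = measure (K2 t) ({0..u1} \<times> {0..u2})"
proof (rule AE_eq_if_Icc_integrals_eq)
  have "markov_kernel K1" "markov_kernel K2" using assms by (auto simp: is_rcd_def)
  then show "(\<lambda>t. measure (K1 t) ({0..u1} \<times> {0..u2})) \<in> borel_measurable borel"
    "(\<lambda>t. measure (K2 t) ({0..u1} \<times> {0..u2})) \<in> borel_measurable borel"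
    "\<And>t. 0 \<le> measure (K1 t) ({0..u1} \<times> {0..u2}) \<and> measure (K1 t) ({0..u1} \<times> {0..u2}) \<le> 1"
    "\<And>t. 0 \<le> measure (K2 t) ({0..u1} \<times> {0..u2}) \<and> measure (K2 t) ({0..u1} \<times> {0..u2}) \<le> 1"
    by (auto intro: markov_kernel_measurable rect_borel prob_space.prob_le_1 markov_kernel_prob_space)
  show "(LINT t:{0..v}|lborel. measure (K1 t) ({0..u1} \<times> {0..u2}))
      = (LINT t:{0..v}|lborel. measure (K2 t) ({0..u1} \<times> {0..u2}))" if "v \<in> {0..1}" for v
    using assms that unfolding is_rcd_def unitI_def by metis
qed

lemma measure_rect_tendsto_decseq:
  fixes N :: "(real \<times> real) measure" and r1 r2 :: "nat \<Rightarrow> real"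
  assumes K: "prob_space N" "sets N = sets borel"
    and r: "decseq r1" "(\<Inter>i. {0..r1 i}) = {0..u1}" "decseq r2" "(\<Inter>i. {0..r2 i}) = {0..u2}"
  shows "(\<lambda>i. measure N ({0..r1 i} \<times> {0..r2 i})) \<longlonglongrightarrow> measure N ({0..u1} \<times> {0..u2})"
proof -
  have "(\<Inter>i. {0..r1 i} \<times> {0..r2 i}) = {0..u1} \<times> {0..u2}"
    using r by auto
  moreover have "(\<lambda>i. measure N ({0..r1 i} \<times> {0..r2 i})) \<longlonglongrightarrow> measure N (\<Inter>i. {0..r1 i} \<times> {0..r2 i})"
  proof (rule Lim_measure_decseq)
    show "range (\<lambda>i. {0..r1 i} \<times> {0..r2 i}) \<subseteq> sets N" using K rect_borel by auto
    show "decseq (\<lambda>i. {0..r1 i} \<times> {0..r2 i})"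
      using r unfolding decseq_def by (auto simp: subset_eq) (meson order_trans)+
    show "emeasure N ({0..r1 i} \<times> {0..r2 i}) \<noteq> \<infinity>" for i
      using K(1) by (simp add: prob_space_def finite_measure.emeasure_finite)
  qed
  ultimately show ?thesis by simp
qed

text \<open>Two versions of the conditional distribution agree, for almost every \<open>t\<close>, on all rectangles
  with rational corners at once, hence by continuity from above on all rectangles.\<close>
lemma is_rcd_AE_unique:
  assumes K1: "is_rcd C K1" and K2: "is_rcd C K2"
  shows "AE t in lborel. t \<in> {0..1} \<longrightarrow> (\<forall>u1\<in>{0..1}. \<forall>u2\<in>{0..1}.
            measure (K1 t) ({0..u1} \<times> {0..u2}) = measure (K2 t) ({0..u1} \<times> {0..u2}))"
proof -
  have mk: "markov_kernel K1" "markov_kernel K2" using K1 K2 by (auto simp: is_rcd_def)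
  define X where "X = \<rat> \<inter> {0..1::real}"
  have "countable X" unfolding X_def by (rule countable_Int1[OF countable_rat])
  then have "AE t in lborel. \<forall>a\<in>X. \<forall>b\<in>X. t \<in> {0..1} \<longrightarrow>
      measure (K1 t) ({0..a} \<times> {0..b}) = measure (K2 t) ({0..a} \<times> {0..b})"
    by (intro AE_ball_countable' is_rcd_AE_rect_eq[OF K1 K2]) (auto simp: X_def)
  then show ?thesis
  proof (rule AE_mp, intro AE_I2 impI ballI)
    fix t u1 u2 :: real
    assume rat: "\<forall>a\<in>X. \<forall>b\<in>X. t \<in> {0..1} \<longrightarrow>
        measure (K1 t) ({0..a} \<times> {0..b}) = measure (K2 t) ({0..a} \<times> {0..b})"
      and t: "t \<in> {0..1}" and u: "u1 \<in> {0..1}" "u2 \<in> {0..1}"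
    obtain r1 where r1: "\<And>i. r1 i \<in> X" "decseq r1" "(\<Inter>i. {0..r1 i}) = {0..u1}"
      using rat_decseq_Inter_Icc[OF u(1)] unfolding X_def by metis
    obtain r2 where r2: "\<And>i. r2 i \<in> X" "decseq r2" "(\<Inter>i. {0..r2 i}) = {0..u2}"
      using rat_decseq_Inter_Icc[OF u(2)] unfolding X_def by metis
    have eq: "(\<lambda>i. measure (K1 t) ({0..r1 i} \<times> {0..r2 i})) = (\<lambda>i. measure (K2 t) ({0..r1 i} \<times> {0..r2 i}))"
      using rat t r1(1) r2(1) by auto
    have lim1: "(\<lambda>i. measure (K1 t) ({0..r1 i} \<times> {0..r2 i})) \<longlonglongrightarrow> measure (K1 t) ({0..u1} \<times> {0..u2})"
      using markov_kernel_prob_space[OF mk(1)] r1(2,3) r2(2,3) by (rule measure_rect_tendsto_decseq)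
    have lim2: "(\<lambda>i. measure (K2 t) ({0..r1 i} \<times> {0..r2 i})) \<longlonglongrightarrow> measure (K2 t) ({0..u1} \<times> {0..u2})"
      using markov_kernel_prob_space[OF mk(2)] r1(2,3) r2(2,3) by (rule measure_rect_tendsto_decseq)
    show "measure (K1 t) ({0..u1} \<times> {0..u2}) = measure (K2 t) ({0..u1} \<times> {0..u2})"
      using LIMSEQ_unique[OF lim1[unfolded eq] lim2] .
  qed
qed

lemma lebesgue_set_integral_AE_eq:
  fixes f g :: "real \<Rightarrow> real"
  assumes [measurable]: "g \<in> borel_measurable borel" "A \<in> sets borel"
    and ae: "AE x in lborel. x \<in> A \<longrightarrow> f x = g x"
  shows "(LINT x:A|lebesgue. f x) = (LINT x:A|lborel. g x)"
proof -
  have ae': "AE x in lebesgue. indicator A x *\<^sub>R g x = indicator A x *\<^sub>R f x"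
    using AE_completion[OF ae] by (rule AE_mp) (auto simp: indicator_def)
  have gm: "(\<lambda>x. indicator A x *\<^sub>R g x) \<in> borel_measurable lebesgue"
    by (intro measurable_completion) measurable
  have "(LINT x:A|lebesgue. f x) = (LINT x|lebesgue. indicator A x *\<^sub>R g x)"
    unfolding set_lebesgue_integral_def
    by (rule integral_cong_AE[OF borel_measurable_AE[OF gm ae'] gm AE_symmetric[OF ae']])
  also have "\<dots> = (LINT x|lborel. indicator A x *\<^sub>R g x)"
    by (rule integral_completion) measurable
  finally show ?thesis by (simp add: set_lebesgue_integral_def)
qed

section \<open>Copulas of segment layouts\<close>

text \<open>A layout gives every index \<open>q\<close> a time slot \<open>[start q, start q + len q)\<close> and a segment;
  the slots are disjoint and fill \<open>[0, 1]\<close> up to a null set. Its copula is the law of \<open>(U1, U2, U3)\<close>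
  with \<open>U3\<close> uniform and \<open>(U1, U2)\<close> drawn from the segment of the slot containing \<open>U3\<close>.\<close>
locale segment_layout =
  fixes Q :: "'q set" and start len :: "'q \<Rightarrow> real" and sg :: "'q \<Rightarrow> seg"
  assumes finite_Q: "finite Q"
    and len_nonneg: "\<And>q. q \<in> Q \<Longrightarrow> 0 \<le> len q"
    and start_nonneg: "\<And>q. q \<in> Q \<Longrightarrow> 0 \<le> start q"
    and slot_le_1: "\<And>q. q \<in> Q \<Longrightarrow> start q + len q \<le> 1"
    and slots_disjoint: "\<And>q q'. q \<in> Q \<Longrightarrow> q' \<in> Q \<Longrightarrow> q \<noteq> q' \<Longrightarrow>
           {start q..<start q + len q} \<inter> {start q'..<start q' + len q'} = {}"
    and sum_len: "(\<Sum>q\<in>Q. len q) = 1"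
    and valid_sg: "\<And>q. q \<in> Q \<Longrightarrow> valid_seg (sg q)"
begin

definition slot :: "'q \<Rightarrow> real set" where "slot q = {start q..<start q + len q}"

definition gap :: "real set" where "gap = - (\<Union>q\<in>Q. slot q)"

text \<open>Off the slots, a null set of times, the kernel is immaterial; it is taken to be the diagonal of
  the unit square.\<close>
definition default_seg :: seg where "default_seg = Seg 0 1 0 1 True"

definition seg_at :: "real \<Rightarrow> seg" where
  "seg_at t = (if t \<in> gap then default_seg else sg (THE q. q \<in> Q \<and> t \<in> slot q))"

definition kernel :: "real \<Rightarrow> (real \<times> real) measure" where
  "kernel t = seg_measure (seg_at t)"

definition copula :: "real \<Rightarrow> real \<Rightarrow> real \<Rightarrow> real" where
  "copula u1 u2 v = (LINT t:{0..v}|lborel. measure (kernel t) ({0..u1} \<times> {0..u2}))"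

definition slot_mass :: "'q \<Rightarrow> real \<Rightarrow> real" where
  "slot_mass q v = measure lborel (slot q \<inter> {0..v})"

definition frechet_mixture :: "real \<Rightarrow> real \<Rightarrow> real" where
  "frechet_mixture s1 s2 = (\<Sum>q\<in>Q. len q * frechet (seg_up (sg q)) s1 s2)"

lemma slot_borel[measurable]: "slot q \<in> sets borel"
  by (simp add: slot_def)

lemma gap_borel[measurable]: "gap \<in> sets borel"
  unfolding gap_def using finite_Q by (intro borel_comp sets.finite_UN) auto

lemma slot_subset: "q \<in> Q \<Longrightarrow> slot q \<subseteq> {0..1}"
  using start_nonneg slot_le_1 len_nonneg by (force simp: slot_def)

lemma disjoint_slots: "q \<in> Q \<Longrightarrow> q' \<in> Q \<Longrightarrow> q \<noteq> q' \<Longrightarrow> slot q \<inter> slot q' = {}"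
  using slots_disjoint by (simp add: slot_def)

lemma seg_at_slot:
  assumes "q \<in> Q" "t \<in> slot q"
  shows "seg_at t = sg q"
proof -
  have "(THE q'. q' \<in> Q \<and> t \<in> slot q') = q"
    using assms disjoint_slots by (intro the_equality) auto
  then show ?thesis using assms by (auto simp: seg_at_def gap_def)
qed

lemma seg_at_gap: "t \<in> gap \<Longrightarrow> seg_at t = default_seg"
  by (simp add: seg_at_def)

lemma valid_seg_at: "valid_seg (seg_at t)"
proof (cases "t \<in> gap")
  case True
  then show ?thesis by (simp add: seg_at_gap default_seg_def valid_seg_def)
next
  case False
  then obtain q where "q \<in> Q" "t \<in> slot q" by (auto simp: gap_def)
  then show ?thesis by (simp add: seg_at_slot valid_sg)
qed

lemma seg_at_eq_sum:
  "(\<phi> (seg_at t) :: real) = (\<Sum>q\<in>Q. indicator (slot q) t * \<phi> (sg q)) + indicator gap t * \<phi> default_seg"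
proof (cases "t \<in> gap")
  case True
  then show ?thesis by (auto simp: seg_at_gap gap_def indicator_def intro!: sum.neutral)
next
  case False
  then obtain q where q: "q \<in> Q" "t \<in> slot q" by (auto simp: gap_def)
  have "(\<Sum>q'\<in>Q. indicator (slot q') t * \<phi> (sg q'))
      = indicator (slot q) t * \<phi> (sg q) + (\<Sum>q'\<in>Q - {q}. indicator (slot q') t * \<phi> (sg q'))"
    by (rule sum.remove[OF finite_Q q(1)])
  also have "(\<Sum>q'\<in>Q - {q}. indicator (slot q') t * \<phi> (sg q')) = 0"
    using q disjoint_slots by (intro sum.neutral) (auto simp: indicator_def)
  finally show ?thesis using q False by (simp add: seg_at_slot)
qed

lemma seg_at_measurable[measurable]: "(\<lambda>t. (\<phi> (seg_at t) :: real)) \<in> borel_measurable borel"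
  by (subst seg_at_eq_sum) measurable

lemma markov_kernel_kernel: "markov_kernel kernel"
  unfolding markov_kernel_def kernel_def
  using prob_space_seg_measure seg_at_measurable[of "\<lambda>s. measure (seg_measure s) _"] by auto

lemma is_rcd_copula: "is_rcd copula kernel"
  unfolding is_rcd_def using markov_kernel_kernel by (simp add: copula_def)

lemma measure_kernel_rect: "measure (kernel t) ({0..u1} \<times> {0..u2}) = seg_cdf (seg_at t) u1 u2"
  by (simp add: kernel_def measure_seg_measure_rect valid_seg_at)

lemma gap_null: "gap \<inter> {0..1} \<in> null_sets lborel"
proof -
  have "measure lborel (\<Union>q\<in>Q. slot q) = (\<Sum>q\<in>Q. measure lborel (slot q))"
    using finite_Q disjoint_slots len_nonneg
    by (intro measure_finite_Union) (auto simp: disjoint_family_on_def slot_def)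
  also have "\<dots> = 1"
    using len_nonneg sum_len by (simp add: slot_def)
  finally have "measure lborel ({0..1} - (\<Union>q\<in>Q. slot q)) = 0"
    using slot_subset finite_Q by (subst measure_Diff) auto
  moreover have "gap \<inter> {0..1} = {0..1} - (\<Union>q\<in>Q. slot q)"
    by (auto simp: gap_def)
  moreover have "gap \<inter> {0..1} \<in> sets lborel" "emeasure lborel (gap \<inter> {0..1}) \<noteq> \<infinity>"
    using emeasure_bounded_finite[of "gap \<inter> {0..1}"] bounded_subset[OF bounded_closed_interval, of "gap \<inter> {0..1}" 0 1]
    by auto
  ultimately show ?thesis
    by (simp add: null_sets_def emeasure_eq_ennreal_measure)
qed

lemma set_integral_seg_at:
  assumes "v \<le> 1"
  shows "(LINT t:{0..v}|lborel. (\<phi> (seg_at t) :: real)) = (\<Sum>q\<in>Q. \<phi> (sg q) * slot_mass q v)"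
proof -
  have gap_v: "measure lborel (gap \<inter> {0..v}) = 0"
    using assms by (intro measure_eq_0_null_sets null_sets_subset[OF gap_null]) auto
  have fin: "emeasure lborel (A \<inter> {0..v}) < \<infinity>" for A :: "real set"
    using emeasure_bounded_finite[of "A \<inter> {0..v}"] bounded_subset[OF bounded_closed_interval, of "A \<inter> {0..v}" 0 v]
    by (auto simp: less_top)
  have "(LINT t:{0..v}|lborel. \<phi> (seg_at t))
      = (LINT t|lborel. (\<Sum>q\<in>Q. \<phi> (sg q) * indicator (slot q \<inter> {0..v}) t) + \<phi> default_seg * indicator (gap \<inter> {0..v}) t)"
    unfolding set_lebesgue_integral_def
    by (subst seg_at_eq_sum, intro Bochner_Integration.integral_cong refl)
       (auto simp: indicator_def sum_distrib_left ac_simps)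
  also have "\<dots> = (\<Sum>q\<in>Q. \<phi> (sg q) * slot_mass q v)"
    using fin gap_v by (simp add: slot_mass_def)
  finally show ?thesis .
qed

lemma copula_eq_sum: "v \<le> 1 \<Longrightarrow> copula u1 u2 v = (\<Sum>q\<in>Q. seg_cdf (sg q) u1 u2 * slot_mass q v)"
  unfolding copula_def measure_kernel_rect by (rule set_integral_seg_at)

lemma slot_mass_eq:
  assumes q: "q \<in> Q"
  shows "slot_mass q v = max 0 (min (len q) (v - start q))"
proof -
  have "0 \<le> start q" "0 \<le> len q" using q start_nonneg len_nonneg by auto
  consider "v < start q" | "start q \<le> v" "v < start q + len q" | "start q + len q \<le> v" by linarith
  then show ?thesis
  proof cases
    case 1
    then have "slot q \<inter> {0..v} = {}" by (auto simp: slot_def)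
    then show ?thesis using 1 \<open>0 \<le> len q\<close> by (simp add: slot_mass_def)
  next
    case 2
    then have "slot q \<inter> {0..v} = {start q..v}" using \<open>0 \<le> start q\<close> by (auto simp: slot_def)
    then show ?thesis using 2 by (simp add: slot_mass_def)
  next
    case 3
    then have "slot q \<inter> {0..v} = {start q..<start q + len q}" using \<open>0 \<le> start q\<close> by (auto simp: slot_def)
    then show ?thesis using 3 \<open>0 \<le> len q\<close> by (simp add: slot_mass_def)
  qed
qed

lemma slot_mass_0: "q \<in> Q \<Longrightarrow> slot_mass q 0 = 0"
  using start_nonneg[of q] len_nonneg[of q] by (simp add: slot_mass_eq)

lemma slot_mass_1: "q \<in> Q \<Longrightarrow> slot_mass q 1 = len q"
  using start_nonneg[of q] len_nonneg[of q] slot_le_1[of q] by (simp add: slot_mass_eq)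

lemma slot_mass_mono: "q \<in> Q \<Longrightarrow> a \<le> b \<Longrightarrow> slot_mass q a \<le> slot_mass q b"
  by (simp add: slot_mass_eq)

lemma slot_mass_bounds: "q \<in> Q \<Longrightarrow> 0 \<le> slot_mass q v \<and> slot_mass q v \<le> len q"
  using len_nonneg by (simp add: slot_mass_eq)

text \<open>The third margin is uniform by construction; the first two are uniform exactly when
  the slot-weighted segment marginals add up to the identity.\<close>
context
  assumes margin1: "\<And>s. s \<in> unitI \<Longrightarrow> (\<Sum>q\<in>Q. len q * seg_cdf1 (sg q) s) = s"
    and margin2: "\<And>s. s \<in> unitI \<Longrightarrow> (\<Sum>q\<in>Q. len q * seg_cdf2 (sg q) s) = s"
begin

lemma copula3_copula: "copula3 copula"
  unfolding copula3_def
proof (intro conjI ballI impI)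
  fix x y assume "x \<in> unitI" "y \<in> unitI"
  then have "x \<le> 1" "y \<le> 1" by (auto simp: unitI_def)
  then show "copula 0 x y = 0" "copula x 0 y = 0" "copula x y 0 = 0"
    by (simp_all add: copula_eq_sum seg_cdf_0_left seg_cdf_0_right valid_sg slot_mass_0)
next
  fix s assume s: "s \<in> unitI"
  show "copula s 1 1 = s" "copula 1 s 1 = s"
    using margin1[OF s] margin2[OF s]
    by (simp_all add: copula_eq_sum seg_cdf_1_left seg_cdf_1_right valid_sg slot_mass_1 mult.commute)
  have "measure (kernel t) ({0..1} \<times> {0..1}) = 1" for t
    by (simp add: measure_kernel_rect seg_cdf_1_left seg_cdf2_1 valid_seg_at)
  then show "copula 1 1 s = s"
    using s by (simp add: copula_def unitI_def set_integral_const)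
next
  fix a1 b1 a2 b2 a3 b3
  assume I: "a1 \<in> unitI" "b1 \<in> unitI" "a2 \<in> unitI" "b2 \<in> unitI" "a3 \<in> unitI" "b3 \<in> unitI"
    and le: "a1 \<le> b1" "a2 \<le> b2" "a3 \<le> b3"
  have "a3 \<le> 1" "b3 \<le> 1" using I by (auto simp: unitI_def)
  then have "copula b1 b2 b3 - copula a1 b2 b3 - copula b1 a2 b3 - copula b1 b2 a3
        + copula a1 a2 b3 + copula a1 b2 a3 + copula b1 a2 a3 - copula a1 a2 a3
      = (\<Sum>q\<in>Q. (seg_cdf (sg q) b1 b2 - seg_cdf (sg q) a1 b2 - seg_cdf (sg q) b1 a2 + seg_cdf (sg q) a1 a2)
                 * (slot_mass q b3 - slot_mass q a3))"
    by (simp add: copula_eq_sum sum_subtractf[symmetric] sum.distrib[symmetric] algebra_simps)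
  also have "\<dots> \<ge> 0"
    using le by (intro sum_nonneg mult_nonneg_nonneg seg_cdf_2increasing valid_sg) (auto simp: slot_mass_mono)
  finally show "copula b1 b2 b3 - copula a1 b2 b3 - copula b1 a2 b3 - copula b1 b2 a3
        + copula a1 a2 b3 + copula a1 b2 a3 + copula b1 a2 a3 - copula a1 a2 a3 \<ge> 0" .
qed

lemma copula_in_Cc: "copula \<in> Cc"
  unfolding Cc_def
proof (intro CollectI conjI exI)
  show "copula3 copula" by (rule copula3_copula)
  show "is_rcd copula kernel" by (rule is_rcd_copula)
  show "AE t in lborel. t \<in> unitI \<longrightarrow> continuous_on UNIV (\<lambda>u. measure (kernel t) ({0..u} \<times> {0..1})) \<and>
         continuous_on UNIV (\<lambda>u. measure (kernel t) ({0..1} \<times> {0..u}))"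
    by (simp add: measure_kernel_rect seg_cdf_1_right seg_cdf_1_left valid_seg_at
        continuous_on_seg_cdf1 continuous_on_seg_cdf2)
qed

end

text \<open>The chosen version \<^term>\<open>KC copula\<close> of the conditional distribution agrees with
  \<^term>\<open>kernel\<close> almost everywhere, which is all that \<^term>\<open>psi\<close> sees.\<close>
lemma KC_copula_AE:
  "AE t in lborel. t \<in> {0..1} \<longrightarrow>
     (\<forall>u1\<in>{0..1}. \<forall>u2\<in>{0..1}. measure (KC copula t) ({0..u1} \<times> {0..u2}) = seg_cdf (seg_at t) u1 u2)"
proof -
  have "is_rcd copula (KC copula)"
    unfolding KC_def by (rule someI[of "is_rcd copula", OF is_rcd_copula])
  then show ?thesis
    using is_rcd_AE_unique[OF _ is_rcd_copula] by (simp add: measure_kernel_rect)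
qed

context
  fixes t
  assumes KC_t: "\<forall>u1\<in>{0..1}. \<forall>u2\<in>{0..1}. measure (KC copula t) ({0..u1} \<times> {0..u2}) = seg_cdf (seg_at t) u1 u2"
begin

lemma F13_copula: "u \<in> {0..1} \<Longrightarrow> F13 copula u t = seg_cdf1 (seg_at t) u"
  using KC_t by (simp add: F13_def seg_cdf_1_right valid_seg_at)

lemma F23_copula: "u \<in> {0..1} \<Longrightarrow> F23 copula u t = seg_cdf2 (seg_at t) u"
  using KC_t by (simp add: F23_def seg_cdf_1_left valid_seg_at)

text \<open>Both marginals of a segment are onto \<open>[0, 1]\<close>, so the defining property of the conditional
  copula pins it down on the whole square.\<close>
lemma condcop_copula:
  assumes s: "s1 \<in> {0..1}" "s2 \<in> {0..1}"
  shows "condcop copula t s1 s2 = frechet (seg_up (seg_at t)) s1 s2"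
proof -
  let ?s = "seg_at t"
  let ?P = "\<lambda>D. copula2 D \<and> (\<forall>u1\<in>unitI. \<forall>u2\<in>unitI.
         measure (KC copula t) ({0..u1} \<times> {0..u2}) = D (F13 copula u1 t) (F23 copula u2 t))"
  have "?P (frechet (seg_up ?s))"
    using KC_t copula2_frechet by (auto simp: unitI_def F13_copula F23_copula seg_cdf_def)
  then have P: "?P (condcop copula t)"
    unfolding condcop_def by (rule someI[of ?P])
  define u1 where "u1 = seg_x ?s + seg_w ?s * s1"
  define u2 where "u2 = seg_y ?s + seg_h ?s * s2"
  have u1: "u1 \<in> {0..1}" "seg_cdf1 ?s u1 = s1"
    unfolding u1_def using seg_cdf1_surj[OF valid_seg_at s(1)] by auto
  have u2: "u2 \<in> {0..1}" "seg_cdf2 ?s u2 = s2"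
    unfolding u2_def using seg_cdf2_surj[OF valid_seg_at s(2)] by auto
  have "condcop copula t (F13 copula u1 t) (F23 copula u2 t) = measure (KC copula t) ({0..u1} \<times> {0..u2})"
    using P u1(1) u2(1) by (auto simp: unitI_def)
  also have "\<dots> = seg_cdf ?s u1 u2" using KC_t u1(1) u2(1) by auto
  finally show ?thesis using u1 u2 by (simp add: F13_copula F23_copula seg_cdf_def)
qed

end

lemma partial_copula_copula:
  assumes s: "s1 \<in> {0..1}" "s2 \<in> {0..1}"
  shows "partial_copula copula s1 s2 = frechet_mixture s1 s2"
proof -
  have "partial_copula copula s1 s2 = (LINT t:{0..1}|lborel. frechet (seg_up (seg_at t)) s1 s2)"
    unfolding partial_copula_def unitI_def
    by (rule lebesgue_set_integral_AE_eq, simp_all, rule AE_mp[OF KC_copula_AE], rule AE_I2)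
       (auto intro: condcop_copula s)
  also have "\<dots> = (\<Sum>q\<in>Q. frechet (seg_up (sg q)) s1 s2 * slot_mass q 1)"
    using set_integral_seg_at[of 1 "\<lambda>s. frechet (seg_up s) s1 s2"] by simp
  also have "\<dots> = frechet_mixture s1 s2"
    by (auto simp: frechet_mixture_def slot_mass_1 intro!: sum.cong)
  finally show ?thesis .
qed

lemma psi_copula_eq:
  assumes u: "u1 \<in> {0..1}" "u2 \<in> {0..1}" and v: "v \<le> 1"
  shows "psi copula u1 u2 v = (\<Sum>q\<in>Q. frechet_mixture (seg_cdf1 (sg q) u1) (seg_cdf2 (sg q) u2) * slot_mass q v)"
proof -
  have "psi copula u1 u2 v = (LINT t:{0..v}|lborel. frechet_mixture (seg_cdf1 (seg_at t) u1) (seg_cdf2 (seg_at t) u2))"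
    unfolding psi_def
  proof (rule lebesgue_set_integral_AE_eq)
    show "AE t in lborel. t \<in> {0..v} \<longrightarrow>
        partial_copula copula (F13 copula u1 t) (F23 copula u2 t) = frechet_mixture (seg_cdf1 (seg_at t) u1) (seg_cdf2 (seg_at t) u2)"
      using KC_copula_AE
    proof (rule AE_mp, intro AE_I2 impI)
      fix t assume "t \<in> {0..1} \<longrightarrow> (\<forall>u1\<in>{0..1}. \<forall>u2\<in>{0..1}.
          measure (KC copula t) ({0..u1} \<times> {0..u2}) = seg_cdf (seg_at t) u1 u2)" and "t \<in> {0..v}"
      then have KC_t: "\<forall>u1\<in>{0..1}. \<forall>u2\<in>{0..1}. measure (KC copula t) ({0..u1} \<times> {0..u2}) = seg_cdf (seg_at t) u1 u2"
        using v by auto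
      show "partial_copula copula (F13 copula u1 t) (F23 copula u2 t) = frechet_mixture (seg_cdf1 (seg_at t) u1) (seg_cdf2 (seg_at t) u2)"
        using F13_copula[OF KC_t] F23_copula[OF KC_t] u partial_copula_copula
          seg_cdf1_bounds[OF valid_seg_at] seg_cdf2_bounds[OF valid_seg_at]
        by simp
    qed
  qed simp_all
  also have "\<dots> = (\<Sum>q\<in>Q. frechet_mixture (seg_cdf1 (sg q) u1) (seg_cdf2 (sg q) u2) * slot_mass q v)"
    using v by (rule set_integral_seg_at)
  finally show ?thesis .
qed

lemma frechet_mixture_bounds:
  assumes "s1 \<in> {0..1}" "s2 \<in> {0..1}"
  shows "0 \<le> frechet_mixture s1 s2 \<and> frechet_mixture s1 s2 \<le> 1"
proof -
  have fr: "0 \<le> frechet up s1 s2 \<and> frechet up s1 s2 \<le> 1" for up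
    using assms by (rule frechet_bounds)
  have "0 \<le> frechet_mixture s1 s2"
    unfolding frechet_mixture_def using fr len_nonneg by (intro sum_nonneg mult_nonneg_nonneg) auto
  moreover have "frechet_mixture s1 s2 \<le> (\<Sum>q\<in>Q. len q * 1)"
    unfolding frechet_mixture_def using fr len_nonneg by (intro sum_mono mult_left_mono) auto
  ultimately show ?thesis using sum_len by simp
qed

lemma abs_psi_copula_le_1:
  assumes "u1 \<in> {0..1}" "u2 \<in> {0..1}" "v \<in> {0..1}"
  shows "\<bar>psi copula u1 u2 v\<bar> \<le> 1"
proof -
  let ?S = "\<Sum>q\<in>Q. frechet_mixture (seg_cdf1 (sg q) u1) (seg_cdf2 (sg q) u2) * slot_mass q v"
  have fm: "0 \<le> frechet_mixture (seg_cdf1 (sg q) u1) (seg_cdf2 (sg q) u2)"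
    "frechet_mixture (seg_cdf1 (sg q) u1) (seg_cdf2 (sg q) u2) \<le> 1" if "q \<in> Q" for q
    using frechet_mixture_bounds seg_cdf1_bounds[OF valid_sg[OF that]] seg_cdf2_bounds[OF valid_sg[OF that]]
    by auto
  have "0 \<le> ?S"
    using fm slot_mass_bounds by (intro sum_nonneg mult_nonneg_nonneg) auto
  moreover have "?S \<le> (\<Sum>q\<in>Q. 1 * len q)"
    using fm slot_mass_bounds by (intro sum_mono mult_mono) auto
  ultimately show ?thesis
    using assms psi_copula_eq sum_len by simp
qed

end

section \<open>Grid copulas\<close>

definition box_volume3 :: "(nat \<Rightarrow> nat \<Rightarrow> nat \<Rightarrow> real) \<Rightarrow> nat \<Rightarrow> nat \<Rightarrow> nat \<Rightarrow> real" where
  "box_volume3 G i j k = G (Suc i) (Suc j) (Suc k) - G i (Suc j) (Suc k) - G (Suc i) j (Suc k)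
     - G (Suc i) (Suc j) k + G i j (Suc k) + G i (Suc j) k + G (Suc i) j k - G i j k"

lemma sum_box_volume3:
  "(\<Sum>i<a. \<Sum>j<b. \<Sum>k<c. box_volume3 G i j k) =
     G a b c - G 0 b c - G a 0 c - G a b 0 + G 0 0 c + G 0 b 0 + G a 0 0 - G 0 0 0"
proof -
  have k: "(\<Sum>k<c. box_volume3 G i j k)
      = (G (Suc i) (Suc j) c - G i (Suc j) c - G (Suc i) j c + G i j c)
        - (G (Suc i) (Suc j) 0 - G i (Suc j) 0 - G (Suc i) j 0 + G i j 0)" for i j
    unfolding box_volume3_def
    using sum_lessThan_telescope[of "\<lambda>k. G (Suc i) (Suc j) k - G i (Suc j) k - G (Suc i) j k + G i j k" c]
    by (simp add: algebra_simps)
  have j: "(\<Sum>j<b. \<Sum>k<c. box_volume3 G i j k)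
      = (G (Suc i) b c - G i b c) - (G (Suc i) 0 c - G i 0 c) - (G (Suc i) b 0 - G i b 0) + (G (Suc i) 0 0 - G i 0 0)" for i
    unfolding k
    using sum_lessThan_telescope[of "\<lambda>j. (G (Suc i) j c - G i j c) - (G (Suc i) j 0 - G i j 0)" b]
    by (simp add: algebra_simps)
  show ?thesis
    unfolding j using sum_lessThan_telescope[of "\<lambda>i. G i b c - G i 0 c - G i b 0 + G i 0 0" a]
    by (simp add: algebra_simps)
qed

definition grid_cell_mass :: "(real \<Rightarrow> real \<Rightarrow> real \<Rightarrow> real) \<Rightarrow> nat \<Rightarrow> nat \<Rightarrow> nat \<Rightarrow> nat \<Rightarrow> real" where
  "grid_cell_mass C n = box_volume3 (\<lambda>a b c. C (real a / real n) (real b / real n) (real c / real n))"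

lemma grid_point_in_unitI: "a \<le> n \<Longrightarrow> real a / real n \<in> unitI"
  by (auto simp: unitI_def divide_simps)

lemma eq_inverse_if_partial_sums_linear:
  fixes F :: "nat \<Rightarrow> real"
  assumes "\<And>a. a \<le> n \<Longrightarrow> (\<Sum>i<a. F i) = real a / real n" and "i < n"
  shows "F i = 1 / real n"
proof -
  have "F i = (\<Sum>i'<Suc i. F i') - (\<Sum>i'<i. F i')" by simp
  also have "\<dots> = real (Suc i) / real n - real i / real n" using assms(1)[of "Suc i"] assms(1)[of i] assms(2) by simp
  finally show ?thesis by (simp add: diff_divide_distrib[symmetric])
qed

context
  fixes C :: "real \<Rightarrow> real \<Rightarrow> real \<Rightarrow> real" and n :: nat
  assumes C: "copula3 C" and n: "0 < n"
begin

lemma sum_grid_cell_mass: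
  "a \<le> n \<Longrightarrow> b \<le> n \<Longrightarrow> c \<le> n \<Longrightarrow>
   (\<Sum>i<a. \<Sum>j<b. \<Sum>k<c. grid_cell_mass C n i j k) = C (real a / real n) (real b / real n) (real c / real n)"
  unfolding grid_cell_mass_def sum_box_volume3
  using copula3_grounded[OF C] grid_point_in_unitI unitI_0_1 by simp

lemma grid_cell_mass_nonneg: "i < n \<Longrightarrow> j < n \<Longrightarrow> k < n \<Longrightarrow> 0 \<le> grid_cell_mass C n i j k"
  unfolding grid_cell_mass_def box_volume3_def
  using grid_point_in_unitI[of i n] grid_point_in_unitI[of "Suc i" n] grid_point_in_unitI[of j n]
    grid_point_in_unitI[of "Suc j" n] grid_point_in_unitI[of k n] grid_point_in_unitI[of "Suc k" n]
  by (intro copula3_volume_nonneg[OF C]) (auto intro: divide_right_mono)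

lemma grid_cell_mass_sum_jk: "i < n \<Longrightarrow> (\<Sum>j<n. \<Sum>k<n. grid_cell_mass C n i j k) = 1 / real n"
  by (rule eq_inverse_if_partial_sums_linear)
     (use copula3_margins[OF C] grid_point_in_unitI n in \<open>simp add: sum_grid_cell_mass\<close>)

lemma grid_cell_mass_sum_ik: "j < n \<Longrightarrow> (\<Sum>i<n. \<Sum>k<n. grid_cell_mass C n i j k) = 1 / real n"
proof (rule eq_inverse_if_partial_sums_linear[where F = "\<lambda>j. \<Sum>i<n. \<Sum>k<n. grid_cell_mass C n i j k"])
  fix b assume "b \<le> n"
  have "(\<Sum>j<b. \<Sum>i<n. \<Sum>k<n. grid_cell_mass C n i j k) = (\<Sum>i<n. \<Sum>j<b. \<Sum>k<n. grid_cell_mass C n i j k)"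
    by (rule sum.swap)
  also have "\<dots> = real b / real n"
    using \<open>b \<le> n\<close> copula3_margins[OF C] grid_point_in_unitI n by (simp add: sum_grid_cell_mass)
  finally show "(\<Sum>j<b. \<Sum>i<n. \<Sum>k<n. grid_cell_mass C n i j k) = real b / real n" .
qed

lemma grid_cell_mass_sum_ij: "k < n \<Longrightarrow> (\<Sum>i<n. \<Sum>j<n. grid_cell_mass C n i j k) = 1 / real n"
proof (rule eq_inverse_if_partial_sums_linear[where F = "\<lambda>k. \<Sum>i<n. \<Sum>j<n. grid_cell_mass C n i j k"])
  fix c assume "c \<le> n"
  have "(\<Sum>k<c. \<Sum>i<n. \<Sum>j<n. grid_cell_mass C n i j k) = (\<Sum>i<n. \<Sum>j<n. \<Sum>k<c. grid_cell_mass C n i j k)"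
    by (simp only: sum.swap[of _ "{..<c}"] sum.swap[of "\<lambda>j k. grid_cell_mass C n _ j k" "{..<c}" "{..<n}"])
  also have "\<dots> = real c / real n"
    using \<open>c \<le> n\<close> copula3_margins[OF C] grid_point_in_unitI n by (simp add: sum_grid_cell_mass)
  finally show "(\<Sum>k<c. \<Sum>i<n. \<Sum>j<n. grid_cell_mass C n i j k) = real c / real n" .
qed

end

lemma sum_lessThan_mult_split:
  fixes g :: "nat \<Rightarrow> real"
  shows "(\<Sum>p<a * n. g p) = (\<Sum>i<a. \<Sum>j<n. g (i * n + j))"
proof -
  have "(\<Sum>p\<in>{i * n..<i * n + n}. g p) = (\<Sum>j<n. g (i * n + j))" for i
    using sum.shift_bounds_nat_ivl[of g 0 "i * n" n] by (simp add: atLeast0LessThan add.commute)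
  then show ?thesis
    using sum.nat_group[of g n a] by simp
qed

locale grid_distribution =
  fixes n :: nat and m :: "nat \<Rightarrow> nat \<Rightarrow> nat \<Rightarrow> real"
  assumes n_pos: "0 < n"
    and m_nonneg: "\<And>i j k. i < n \<Longrightarrow> j < n \<Longrightarrow> k < n \<Longrightarrow> 0 \<le> m i j k"
    and sum_m_jk: "\<And>i. i < n \<Longrightarrow> (\<Sum>j<n. \<Sum>k<n. m i j k) = 1 / real n"
    and sum_m_ik: "\<And>j. j < n \<Longrightarrow> (\<Sum>i<n. \<Sum>k<n. m i j k) = 1 / real n"
    and sum_m_ij: "\<And>k. k < n \<Longrightarrow> (\<Sum>i<n. \<Sum>j<n. m i j k) = 1 / real n"

lemma grid_distribution_grid_cell_mass:
  "copula3 C \<Longrightarrow> 0 < n \<Longrightarrow> grid_distribution n (grid_cell_mass C n)"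
  by unfold_locales
     (auto intro: grid_cell_mass_nonneg grid_cell_mass_sum_jk grid_cell_mass_sum_ik grid_cell_mass_sum_ij)

context grid_distribution
begin

abbreviation ci :: "nat \<times> nat \<times> nat \<Rightarrow> nat" where "ci c \<equiv> fst c"
abbreviation cj :: "nat \<times> nat \<times> nat \<Rightarrow> nat" where "cj c \<equiv> fst (snd c)"
abbreviation ck :: "nat \<times> nat \<times> nat \<Rightarrow> nat" where "ck c \<equiv> snd (snd c)"

definition cells :: "(nat \<times> nat \<times> nat) set" where "cells = {..<n} \<times> {..<n} \<times> {..<n}"

definition cell_mass :: "nat \<times> nat \<times> nat \<Rightarrow> real" where "cell_mass c = m (ci c) (cj c) (ck c)"

text \<open>The cells are enumerated slab by slab (\<open>k\<close> first, then \<open>i\<close>, then \<open>j\<close>), and the time axis is cut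
  into consecutive intervals of lengths \<^term>\<open>cell_mass\<close> in this order; as each slab has mass \<open>1/n\<close>,
  the interval of a cell lies in \<open>[k/n, (k+1)/n]\<close>.\<close>
definition cell_index :: "nat \<times> nat \<times> nat \<Rightarrow> nat" where
  "cell_index c = (ck c * n + ci c) * n + cj c"

definition index_mass :: "nat \<Rightarrow> real" where
  "index_mass p = m (p div n mod n) (p mod n) (p div n div n)"

definition cell_start :: "nat \<times> nat \<times> nat \<Rightarrow> real" where
  "cell_start c = (\<Sum>p<cell_index c. index_mass p)"

lemma real_n_pos: "0 < real n"
  using n_pos by simp

lemma mem_cells_iff: "c \<in> cells \<longleftrightarrow> ci c < n \<and> cj c < n \<and> ck c < n"
  by (auto simp: cells_def mem_Times_iff)

lemma finite_cells: "finite cells"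
  by (simp add: cells_def)

lemma cell_mass_nonneg: "c \<in> cells \<Longrightarrow> 0 \<le> cell_mass c"
  by (auto simp: mem_cells_iff cell_mass_def intro: m_nonneg)

lemma sum_cell_mass: "(\<Sum>c\<in>cells. cell_mass c) = 1"
proof -
  have "(\<Sum>c\<in>cells. cell_mass c) = (\<Sum>i<n. \<Sum>j<n. \<Sum>k<n. m i j k)"
    by (simp add: cells_def cell_mass_def sum.cartesian_product case_prod_unfold)
  also have "\<dots> = 1" using sum_m_jk n_pos by simp
  finally show ?thesis .
qed

lemma mult_add_less_square: "i < n \<Longrightarrow> j < n \<Longrightarrow> i * n + j < n * (n::nat)"
proof -
  assume "i < n" "j < n"
  then have "i * n + j < Suc i * n" by simp
  also have "\<dots> \<le> n * n" using \<open>i < n\<close> by (intro mult_right_mono) auto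
  finally show ?thesis .
qed

lemma cell_index_eq: "cell_index c = ck c * (n * n) + (ci c * n + cj c)"
  by (simp add: cell_index_def algebra_simps)

lemma cell_index_bounds:
  assumes "c \<in> cells"
  shows "ck c * n * n \<le> cell_index c" "Suc (cell_index c) \<le> Suc (ck c) * n * n"
    "Suc (ck c) * n * n \<le> n * n * n"
proof -
  have "ci c * n + cj c < n * n" using assms by (intro mult_add_less_square) (auto simp: mem_cells_iff)
  moreover have "Suc (ck c) * n * n = ck c * (n * n) + n * n" by (simp add: algebra_simps)
  ultimately show "Suc (cell_index c) \<le> Suc (ck c) * n * n" by (simp add: cell_index_eq)
  show "ck c * n * n \<le> cell_index c" by (simp add: cell_index_eq mult.assoc)
  show "Suc (ck c) * n * n \<le> n * n * n" using assms by (intro mult_right_mono) (auto simp: mem_cells_iff)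
qed

lemma cell_index_less: "c \<in> cells \<Longrightarrow> cell_index c < n * n * n"
  using cell_index_bounds(2,3)[of c] by linarith

lemma index_mass_nonneg: "p < n * n * n \<Longrightarrow> 0 \<le> index_mass p"
  unfolding index_mass_def using n_pos
  by (intro m_nonneg) (auto simp: less_mult_imp_div_less div_mult2_eq[symmetric] mult.assoc)

lemma index_mass_cell_index: "c \<in> cells \<Longrightarrow> index_mass (cell_index c) = cell_mass c"
  by (simp add: mem_cells_iff index_mass_def cell_index_def cell_mass_def)

lemma sum_index_mass_slabs: "k \<le> n \<Longrightarrow> (\<Sum>p<k * n * n. index_mass p) = real k / real n"
proof -
  assume "k \<le> n"
  have "index_mass ((q * n + i) * n + j) = m i j q" if "i < n" "j < n" for q i j
    using that by (simp add: index_mass_def)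
  then have "(\<Sum>p<k * n * n. index_mass p) = (\<Sum>q<k. \<Sum>i<n. \<Sum>j<n. m i j q)"
    by (simp add: sum_lessThan_mult_split)
  also have "\<dots> = (\<Sum>q<k. 1 / real n)"
    using \<open>k \<le> n\<close> sum_m_ij by simp
  finally show ?thesis by simp
qed

lemma sum_index_mass_mono: "a \<le> b \<Longrightarrow> b \<le> n * n * n \<Longrightarrow> (\<Sum>p<a. index_mass p) \<le> (\<Sum>p<b. index_mass p)"
  by (intro sum_mono2) (auto intro!: index_mass_nonneg)

lemma cell_slot_bounds:
  assumes c: "c \<in> cells"
  shows "real (ck c) / real n \<le> cell_start c" "cell_start c + cell_mass c \<le> real (Suc (ck c)) / real n"
proof -
  note i = cell_index_bounds(1)[OF c] and j = cell_index_bounds(2)[OF c]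
  have "real (ck c) / real n = (\<Sum>p<ck c * n * n. index_mass p)"
    using c by (simp add: sum_index_mass_slabs mem_cells_iff)
  also have "\<dots> \<le> cell_start c"
    unfolding cell_start_def using i cell_index_less[OF c] by (intro sum_index_mass_mono) auto
  finally show "real (ck c) / real n \<le> cell_start c" .
  have "cell_start c + cell_mass c = (\<Sum>p<Suc (cell_index c). index_mass p)"
    using c by (simp add: cell_start_def index_mass_cell_index)
  also have "\<dots> \<le> (\<Sum>p<Suc (ck c) * n * n. index_mass p)"
    using j cell_index_bounds(3)[OF c] by (rule sum_index_mass_mono)
  also have "\<dots> = real (Suc (ck c)) / real n"
    using c by (intro sum_index_mass_slabs) (simp add: mem_cells_iff Suc_leI)
  finally show "cell_start c + cell_mass c \<le> real (Suc (ck c)) / real n" .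
qed

lemma cell_slots_disjoint:
  assumes c: "c \<in> cells" and c': "c' \<in> cells" and "c \<noteq> c'"
  shows "{cell_start c..<cell_start c + cell_mass c} \<inter> {cell_start c'..<cell_start c' + cell_mass c'} = {}"
proof -
  have ordered: "cell_start c1 + cell_mass c1 \<le> cell_start c2"
    if c1: "c1 \<in> cells" and c2: "c2 \<in> cells" and lt: "cell_index c1 < cell_index c2" for c1 c2
  proof -
    have "cell_start c1 + cell_mass c1 = (\<Sum>p<Suc (cell_index c1). index_mass p)"
      using c1 by (simp add: cell_start_def index_mass_cell_index)
    also have "\<dots> \<le> cell_start c2"
      unfolding cell_start_def using lt cell_index_less[OF c2] by (intro sum_index_mass_mono) auto
    finally show ?thesis .
  qed
  have "cell_index c \<noteq> cell_index c'"
  proof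
    assume "cell_index c = cell_index c'"
    then have "cell_index c mod n = cell_index c' mod n" "cell_index c div n mod n = cell_index c' div n mod n"
      "cell_index c div n div n = cell_index c' div n div n" by simp_all
    then show False using c c' \<open>c \<noteq> c'\<close> by (auto simp: mem_cells_iff cell_index_def prod_eq_iff)
  qed
  then consider "cell_index c < cell_index c'" | "cell_index c' < cell_index c" by linarith
  then show ?thesis
    by cases (auto dest: ordered[OF c c'] ordered[OF c' c])
qed

lemma segment_layout_in_cells:
  fixes Q :: "'q set" and cell :: "'q \<Rightarrow> nat \<times> nat \<times> nat" and off len :: "'q \<Rightarrow> real"
  assumes "finite Q"
    and cell: "\<And>q. q \<in> Q \<Longrightarrow> cell q \<in> cells"
    and off: "\<And>q. q \<in> Q \<Longrightarrow> 0 \<le> off q"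
    and len: "\<And>q. q \<in> Q \<Longrightarrow> 0 \<le> len q"
    and fit: "\<And>q. q \<in> Q \<Longrightarrow> off q + len q \<le> cell_mass (cell q)"
    and same_cell: "\<And>q q'. q \<in> Q \<Longrightarrow> q' \<in> Q \<Longrightarrow> q \<noteq> q' \<Longrightarrow> cell q = cell q' \<Longrightarrow>
           {off q..<off q + len q} \<inter> {off q'..<off q' + len q'} = {}"
    and "(\<Sum>q\<in>Q. len q) = 1"
    and "\<And>q. q \<in> Q \<Longrightarrow> valid_seg (sg q)"
  shows "segment_layout Q (\<lambda>q. cell_start (cell q) + off q) len sg"
proof
  fix q assume q: "q \<in> Q"
  have "real (ck (cell q)) / real n \<le> cell_start (cell q)"
    "cell_start (cell q) + cell_mass (cell q) \<le> real (Suc (ck (cell q))) / real n"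
    using cell_slot_bounds[OF cell[OF q]] by auto
  moreover have "real (Suc (ck (cell q))) / real n \<le> 1"
    using cell[OF q] n_pos by (auto simp: mem_cells_iff)
  moreover have "0 \<le> real (ck (cell q)) / real n" by simp
  ultimately show "0 \<le> cell_start (cell q) + off q" "cell_start (cell q) + off q + len q \<le> 1"
    using off[OF q] fit[OF q] by linarith+
next
  fix q q' assume q: "q \<in> Q" and q': "q' \<in> Q" and "q \<noteq> q'"
  show "{cell_start (cell q) + off q..<cell_start (cell q) + off q + len q}
      \<inter> {cell_start (cell q') + off q'..<cell_start (cell q') + off q' + len q'} = {}"
  proof (cases "cell q = cell q'")
    case True
    then show ?thesis using same_cell[OF q q' \<open>q \<noteq> q'\<close> True] by (auto simp: disjoint_iff)
  next
    case False
    have "{cell_start (cell p) + off p..<cell_start (cell p) + off p + len p}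
        \<subseteq> {cell_start (cell p)..<cell_start (cell p) + cell_mass (cell p)}" if "p \<in> Q" for p
      using off[OF that] fit[OF that] by auto
    then show ?thesis using cell_slots_disjoint[OF cell[OF q] cell[OF q'] False] q q' by blast
  qed
qed (use assms in auto)

definition cell_seg :: "nat \<Rightarrow> nat \<Rightarrow> bool \<Rightarrow> seg" where
  "cell_seg i j up = Seg (real i / real n) (1 / real n) (real j / real n) (1 / real n) up"

definition lower_seg :: "nat \<Rightarrow> nat \<Rightarrow> seg" where
  "lower_seg i j = Seg (real i / real n) (1 / (2 * real n)) (real j / real n) (1 / (2 * real n)) True"

definition upper_seg :: "nat \<Rightarrow> nat \<Rightarrow> seg" where
  "upper_seg i j = Seg (real i / real n + 1 / (2 * real n)) (1 / (2 * real n))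
                       (real j / real n + 1 / (2 * real n)) (1 / (2 * real n)) True"

lemma grid_step_le_1: "i < n \<Longrightarrow> real i / real n + 1 / real n \<le> 1"
  using n_pos by (simp add: add_divide_distrib[symmetric] divide_le_eq_1)

lemma valid_cell_seg: "i < n \<Longrightarrow> j < n \<Longrightarrow> valid_seg (cell_seg i j up)"
  using grid_step_le_1 n_pos by (simp add: cell_seg_def valid_seg_def)

lemma valid_lower_seg: "i < n \<Longrightarrow> j < n \<Longrightarrow> valid_seg (lower_seg i j)"
  using grid_step_le_1[of i] grid_step_le_1[of j] n_pos frac_le[of 1 1 "real n" "2 * real n"]
  by (simp add: lower_seg_def valid_seg_def)

lemma valid_upper_seg: "i < n \<Longrightarrow> j < n \<Longrightarrow> valid_seg (upper_seg i j)"
  using grid_step_le_1[of i] grid_step_le_1[of j] n_pos by (simp add: upper_seg_def valid_seg_def)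

lemma seg_cdf1_cell_seg: "seg_cdf1 (cell_seg i j up) s = clamp01 (real n * s - real i)"
  and seg_cdf2_cell_seg: "seg_cdf2 (cell_seg i j up) s = clamp01 (real n * s - real j)"
  and seg_cdf1_lower_seg: "seg_cdf1 (lower_seg i j) s = clamp01 (2 * (real n * s - real i))"
  and seg_cdf2_lower_seg: "seg_cdf2 (lower_seg i j) s = clamp01 (2 * (real n * s - real j))"
  and seg_cdf1_upper_seg: "seg_cdf1 (upper_seg i j) s = clamp01 (2 * (real n * s - real i) - 1)"
  and seg_cdf2_upper_seg: "seg_cdf2 (upper_seg i j) s = clamp01 (2 * (real n * s - real j) - 1)"
proof -
  have "(s - a / real n) / (1 / real n) = real n * s - a"
    "(s - a / real n) / (1 / (2 * real n)) = 2 * (real n * s - a)"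
    "(s - (a / real n + 1 / (2 * real n))) / (1 / (2 * real n)) = 2 * (real n * s - a) - 1" for a
    using real_n_pos by (simp_all add: field_simps)
  then show "seg_cdf1 (cell_seg i j up) s = clamp01 (real n * s - real i)"
    "seg_cdf2 (cell_seg i j up) s = clamp01 (real n * s - real j)"
    "seg_cdf1 (lower_seg i j) s = clamp01 (2 * (real n * s - real i))"
    "seg_cdf2 (lower_seg i j) s = clamp01 (2 * (real n * s - real j))"
    "seg_cdf1 (upper_seg i j) s = clamp01 (2 * (real n * s - real i) - 1)"
    "seg_cdf2 (upper_seg i j) s = clamp01 (2 * (real n * s - real j) - 1)"
    by (simp_all only: seg_cdf1_def seg_cdf2_def cell_seg_def lower_seg_def upper_seg_def seg.sel)
qed

lemma sum_clamp01_shifts: "(\<Sum>i<N. clamp01 (x - real i)) = max 0 (min (real N) x)"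
  by (induction N) (simp_all add: clamp01_def max_def min_def)

lemma sum_cell_mass_clamp01_i:
  assumes "s \<in> unitI"
  shows "(\<Sum>c\<in>cells. cell_mass c * clamp01 (real n * s - real (ci c))) = s"
proof -
  have "(\<Sum>c\<in>cells. cell_mass c * clamp01 (real n * s - real (ci c)))
      = (\<Sum>i<n. clamp01 (real n * s - real i) * (\<Sum>j<n. \<Sum>k<n. m i j k))"
    by (simp add: cells_def cell_mass_def sum.cartesian_product case_prod_unfold
        sum_distrib_left sum_distrib_right ac_simps)
  also have "\<dots> = s"
    using assms real_n_pos sum_m_jk by (simp add: sum_clamp01_shifts unitI_def flip: sum_divide_distrib)
  finally show ?thesis .
qed

lemma sum_cell_mass_clamp01_j:
  assumes "s \<in> unitI"
  shows "(\<Sum>c\<in>cells. cell_mass c * clamp01 (real n * s - real (cj c))) = s"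
proof -
  have "(\<Sum>c\<in>cells. cell_mass c * clamp01 (real n * s - real (cj c)))
      = (\<Sum>i<n. \<Sum>j<n. \<Sum>k<n. m i j k * clamp01 (real n * s - real j))"
    by (simp add: cells_def cell_mass_def sum.cartesian_product case_prod_unfold)
  also have "\<dots> = (\<Sum>j<n. \<Sum>i<n. \<Sum>k<n. m i j k * clamp01 (real n * s - real j))"
    by (rule sum.swap)
  also have "\<dots> = (\<Sum>j<n. clamp01 (real n * s - real j) * (\<Sum>i<n. \<Sum>k<n. m i j k))"
    by (simp add: sum_distrib_left sum_distrib_right ac_simps)
  also have "\<dots> = s"
    using assms real_n_pos sum_m_ik by (simp add: sum_clamp01_shifts unitI_def flip: sum_divide_distrib)
  finally show ?thesis .
qed

lemma sum_cells_times_bool: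
  "(\<Sum>q\<in>cells \<times> UNIV. f q) = (\<Sum>c\<in>cells. f (c, True) + (f (c, False) :: real))"
proof -
  have "(\<Sum>q\<in>cells \<times> UNIV. f q) = (\<Sum>c\<in>cells. \<Sum>b\<in>UNIV. f (c, b))"
    by (simp add: sum.cartesian_product)
  then show ?thesis by (simp add: UNIV_bool add.commute)
qed

definition E_start :: "(nat \<times> nat \<times> nat) \<times> bool \<Rightarrow> real" where
  "E_start q = cell_start (fst q) + (if snd q then 0 else cell_mass (fst q) / 2)"

definition E_len :: "(nat \<times> nat \<times> nat) \<times> bool \<Rightarrow> real" where
  "E_len q = cell_mass (fst q) / 2"

definition E_seg :: "(nat \<times> nat \<times> nat) \<times> bool \<Rightarrow> seg" where
  "E_seg q = cell_seg (ci (fst q)) (cj (fst q)) (snd q)"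

lemma segment_layout_E: "segment_layout (cells \<times> UNIV) E_start E_len E_seg"
  unfolding E_start_def[abs_def]
proof (rule segment_layout_in_cells)
  fix q :: "(nat \<times> nat \<times> nat) \<times> bool" assume q: "q \<in> cells \<times> UNIV"
  then show "fst q \<in> cells" "valid_seg (E_seg q)"
    by (auto simp: E_seg_def mem_cells_iff intro: valid_cell_seg)
  show "0 \<le> (if snd q then 0 else cell_mass (fst q) / 2)" "0 \<le> E_len q"
    "(if snd q then 0 else cell_mass (fst q) / 2) + E_len q \<le> cell_mass (fst q)"
    using cell_mass_nonneg[OF \<open>fst q \<in> cells\<close>] by (auto simp: E_len_def)
next
  fix q q' :: "(nat \<times> nat \<times> nat) \<times> bool"
  assume "q \<noteq> q'" "fst q = fst q'"
  then have "snd q \<noteq> snd q'" by (auto simp: prod_eq_iff)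
  then show "{(if snd q then 0 else cell_mass (fst q) / 2)..<(if snd q then 0 else cell_mass (fst q) / 2) + E_len q}
      \<inter> {(if snd q' then 0 else cell_mass (fst q') / 2)..<(if snd q' then 0 else cell_mass (fst q') / 2) + E_len q'} = {}"
    using \<open>fst q = fst q'\<close> by (cases "snd q") (auto simp: E_len_def)
qed (auto simp: finite_cells sum_cells_times_bool E_len_def sum_cell_mass)

sublocale E: segment_layout "cells \<times> UNIV" E_start E_len E_seg
  by (rule segment_layout_E)

lemma E_margin1: "s \<in> unitI \<Longrightarrow> (\<Sum>q\<in>cells \<times> UNIV. E_len q * seg_cdf1 (E_seg q) s) = s"
  using sum_cell_mass_clamp01_i by (simp add: sum_cells_times_bool E_len_def E_seg_def seg_cdf1_cell_seg)

lemma E_margin2: "s \<in> unitI \<Longrightarrow> (\<Sum>q\<in>cells \<times> UNIV. E_len q * seg_cdf2 (E_seg q) s) = s"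
  using sum_cell_mass_clamp01_j by (simp add: sum_cells_times_bool E_len_def E_seg_def seg_cdf2_cell_seg)

lemma E_copula_in_Cc: "E.copula \<in> Cc"
  by (rule E.copula_in_Cc[OF E_margin1 E_margin2])

lemma copula3_E_copula: "copula3 E.copula"
  by (rule E.copula3_copula[OF E_margin1 E_margin2])

lemma E_slot_mass_grid:
  assumes q: "q \<in> cells \<times> UNIV" and "c \<le> n"
  shows "E.slot_mass q (real c / real n) = (if ck (fst q) < c then E_len q else 0)"
proof -
  have cell: "fst q \<in> cells" using q by auto
  note bounds = cell_slot_bounds[OF cell]
  have "0 \<le> E_len q" "E_start q - cell_start (fst q) + E_len q \<le> cell_mass (fst q)" "cell_start (fst q) \<le> E_start q"
    using cell_mass_nonneg[OF cell] by (auto simp: E_start_def E_len_def)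
  moreover have "real (Suc (ck (fst q))) / real n \<le> real c / real n" if "ck (fst q) < c"
    using that real_n_pos by (intro divide_right_mono) auto
  moreover have "real c / real n \<le> real (ck (fst q)) / real n" if "\<not> ck (fst q) < c"
    using that real_n_pos by (intro divide_right_mono) auto
  ultimately show ?thesis
    using bounds by (auto simp: E.slot_mass_eq[OF q] max_def min_def)
qed

lemma seg_cdf_cell_seg_grid:
  assumes "a \<le> n" "b \<le> n"
  shows "seg_cdf (cell_seg i j up) (real a / real n) (real b / real n) = (if i < a \<and> j < b then 1 else 0)"
proof -
  have "real n * (real a / real n) = real a" "real n * (real b / real n) = real b"
    using real_n_pos by auto
  moreover have "clamp01 (real a' - real i') = (if i' < a' then 1 else 0)" for a' i' :: nat
    by (simp add: clamp01_def)
  ultimately show ?thesis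
    by (simp add: seg_cdf_def seg_cdf1_cell_seg seg_cdf2_cell_seg frechet_def)
qed

lemma E_copula_grid:
  assumes "a \<le> n" "b \<le> n" "c \<le> n"
  shows "E.copula (real a / real n) (real b / real n) (real c / real n) = (\<Sum>i<a. \<Sum>j<b. \<Sum>k<c. m i j k)"
proof -
  have "real c / real n \<le> 1" using assms real_n_pos by (simp add: divide_le_eq_1)
  then have "E.copula (real a / real n) (real b / real n) (real c / real n)
      = (\<Sum>q\<in>cells \<times> UNIV. seg_cdf (E_seg q) (real a / real n) (real b / real n) * E.slot_mass q (real c / real n))"
    by (rule E.copula_eq_sum)
  also have "\<dots> = (\<Sum>q\<in>cells \<times> UNIV. if ci (fst q) < a \<and> cj (fst q) < b \<and> ck (fst q) < c then E_len q else 0)"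
    using assms by (intro sum.cong refl) (auto simp: E_seg_def seg_cdf_cell_seg_grid E_slot_mass_grid)
  also have "\<dots> = (\<Sum>x\<in>cells. if ci x < a \<and> cj x < b \<and> ck x < c then cell_mass x else 0)"
    unfolding sum_cells_times_bool by (intro sum.cong refl) (simp add: E_len_def)
  also have "\<dots> = (\<Sum>x\<in>{..<a} \<times> {..<b} \<times> {..<c}. cell_mass x)"
    using assms by (simp add: sum.If_cases finite_cells) (auto intro!: sum.cong simp: mem_cells_iff)
  also have "\<dots> = (\<Sum>i<a. \<Sum>j<b. \<Sum>k<c. m i j k)"
    by (simp add: cell_mass_def sum.cartesian_product case_prod_unfold)
  finally show ?thesis .
qed

end

lemma grid_bracket:
  fixes x :: real
  assumes x: "x \<in> unitI" and n: "0 < n"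
  obtains a b :: nat where "a \<le> n" "b \<le> n" "real a / real n \<le> x" "x \<le> real b / real n"
    "x - real a / real n \<le> 1 / real n" "real b / real n - x \<le> 1 / real n"
proof
  have nx: "0 \<le> real n * x" "real n * x \<le> real n"
    using x n by (auto simp: unitI_def intro: mult_left_le)
  have fl: "real (nat \<lfloor>real n * x\<rfloor>) = of_int \<lfloor>real n * x\<rfloor>"
    and cl: "real (nat \<lceil>real n * x\<rceil>) = of_int \<lceil>real n * x\<rceil>" using nx by simp_all
  show "nat \<lfloor>real n * x\<rfloor> \<le> n" "nat \<lceil>real n * x\<rceil> \<le> n"
    using nx by (linarith, simp add: nat_le_iff ceiling_le_iff)
  show "real (nat \<lfloor>real n * x\<rfloor>) / real n \<le> x" "x \<le> real (nat \<lceil>real n * x\<rceil>) / real n"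
    unfolding fl cl using n by (simp_all add: divide_simps mult.commute)
  have "x - real (nat \<lfloor>real n * x\<rfloor>) / real n = (real n * x - of_int \<lfloor>real n * x\<rfloor>) / real n"
    "real (nat \<lceil>real n * x\<rceil>) / real n - x = (of_int \<lceil>real n * x\<rceil> - real n * x) / real n"
    unfolding fl cl using n by (simp_all add: field_simps)
  moreover have "real n * x - of_int \<lfloor>real n * x\<rfloor> \<le> 1" "of_int \<lceil>real n * x\<rceil> - real n * x \<le> 1"
    by linarith+
  ultimately show "x - real (nat \<lfloor>real n * x\<rfloor>) / real n \<le> 1 / real n"
    "real (nat \<lceil>real n * x\<rceil>) / real n - x \<le> 1 / real n"
    using n by (simp_all add: divide_right_mono)
qed

text \<open>Both copulas are monotone and 1-Lipschitz in each coordinate, so agreement at the corners of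
  every grid cell forces them to be \<open>3/n\<close>-close inside it.\<close>
lemma dinf_le_if_grid_eq:
  assumes C: "copula3 C" and D: "copula3 D" and n: "0 < n"
    and grid: "\<And>a b c. a \<le> n \<Longrightarrow> b \<le> n \<Longrightarrow> c \<le> n \<Longrightarrow>
      C (real a / real n) (real b / real n) (real c / real n) = D (real a / real n) (real b / real n) (real c / real n)"
  shows "dinf C D \<le> 3 / real n"
proof (rule dinf_leI)
  fix x y z assume xyz: "x \<in> unitI" "y \<in> unitI" "z \<in> unitI"
  obtain ax bx where x: "ax \<le> n" "bx \<le> n" "real ax / real n \<le> x" "x \<le> real bx / real n"
    "x - real ax / real n \<le> 1 / real n" "real bx / real n - x \<le> 1 / real n"
    using grid_bracket[OF xyz(1) n] .
  obtain ay by' where y: "ay \<le> n" "by' \<le> n" "real ay / real n \<le> y" "y \<le> real by' / real n"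
    "y - real ay / real n \<le> 1 / real n" "real by' / real n - y \<le> 1 / real n"
    using grid_bracket[OF xyz(2) n] .
  obtain az bz where z: "az \<le> n" "bz \<le> n" "real az / real n \<le> z" "z \<le> real bz / real n"
    "z - real az / real n \<le> 1 / real n" "real bz / real n - z \<le> 1 / real n"
    using grid_bracket[OF xyz(3) n] .
  define lo where "lo = (real ax / real n, real ay / real n, real az / real n)"
  define hi where "hi = (real bx / real n, real by' / real n, real bz / real n)"
  have lo_in: "fst lo \<in> unitI" "fst (snd lo) \<in> unitI" "snd (snd lo) \<in> unitI"
    and hi_in: "fst hi \<in> unitI" "fst (snd hi) \<in> unitI" "snd (snd hi) \<in> unitI"
    using x(1,2) y(1,2) z(1,2) by (simp_all add: lo_def hi_def grid_point_in_unitI)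
  have "D x y z \<le> D (fst hi) (fst (snd hi)) (snd (snd hi))"
    "C (fst hi) (fst (snd hi)) (snd (snd hi)) - C x y z \<le> (fst hi - x) + (fst (snd hi) - y) + (snd (snd hi) - z)"
    using copula3_mono_lipschitz[OF D xyz hi_in] copula3_mono_lipschitz[OF C xyz hi_in] x y z
    by (simp_all add: hi_def)
  moreover have "D (fst lo) (fst (snd lo)) (snd (snd lo)) \<le> D x y z"
    "C x y z - C (fst lo) (fst (snd lo)) (snd (snd lo)) \<le> (x - fst lo) + (y - fst (snd lo)) + (z - snd (snd lo))"
    using copula3_mono_lipschitz[OF D lo_in xyz] copula3_mono_lipschitz[OF C lo_in xyz] x y z
    by (simp_all add: lo_def)
  moreover have "(fst hi - x) + (fst (snd hi) - y) + (snd (snd hi) - z) \<le> 3 / real n"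
    "(x - fst lo) + (y - fst (snd lo)) + (z - snd (snd lo)) \<le> 3 / real n"
    using x y z by (simp_all add: lo_def hi_def)
  ultimately show "\<bar>C x y z - D x y z\<bar> \<le> 3 / real n"
    using grid[OF x(1) y(1) z(1)] grid[OF x(2) y(2) z(2)] by (simp add: abs_le_iff lo_def hi_def)
qed

definition grid_copula :: "nat \<Rightarrow> (nat \<Rightarrow> nat \<Rightarrow> nat \<Rightarrow> real) \<Rightarrow> real \<Rightarrow> real \<Rightarrow> real \<Rightarrow> real" where
  "grid_copula n m = segment_layout.copula (grid_distribution.cells n \<times> UNIV)
     (grid_distribution.E_start n m) (grid_distribution.E_len m) (grid_distribution.E_seg n)"

lemma (in grid_distribution) grid_copula_eq: "grid_copula n m = E.copula"
  by (simp add: grid_copula_def)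

lemma dinf_grid_copula_le:
  assumes C: "copula3 C" and n: "0 < n"
  shows "dinf C (grid_copula n (grid_cell_mass C n)) \<le> 3 / real n"
proof -
  interpret grid_distribution n "grid_cell_mass C n"
    by (rule grid_distribution_grid_cell_mass[OF C n])
  show ?thesis
    unfolding grid_copula_eq
    by (rule dinf_le_if_grid_eq[OF C copula3_E_copula n])
       (simp add: E_copula_grid sum_grid_cell_mass[OF C n])
qed

section \<open>Refined grid copulas\<close>

lemma sum_lessThan_double:
  fixes M :: nat
  shows "(\<Sum>r<2 * M. h r) = (\<Sum>l<M. h (2 * l) + (h (2 * l + 1) :: real))"
  by (induction M) (simp_all add: algebra_simps)

lemma clamp01_double: "clamp01 (2 * x) + clamp01 (2 * x - 1) = 2 * clamp01 x"
  by (simp add: clamp01_def max_def min_def)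

lemma min_clamp01_double:
  "2 * min (clamp01 a) (clamp01 b) = min (clamp01 (2 * a)) (clamp01 (2 * b)) + min (clamp01 (2 * a - 1)) (clamp01 (2 * b - 1))"
  by (simp add: clamp01_def min_def max_def)

lemma sum_slot_pieces:
  assumes "0 \<le> (l :: real)"
  shows "(\<Sum>r<N. max 0 (min l (x - real r * l))) = max 0 (min (real N * l) x)"
proof (induction N)
  case (Suc N)
  have "max 0 (min y x) + max 0 (min l (x - y)) = max 0 (min (y + l) x)" if "0 \<le> y" for y
    using assms that by (simp add: max_def min_def)
  from this[of "real N * l"] show ?case
    using Suc assms by (simp add: algebra_simps)
qed simp

lemma alternating_sum_antimono_bounds:
  fixes g :: "nat \<Rightarrow> real"
  assumes anti: "\<And>r r'. r \<le> r' \<Longrightarrow> g r' \<le> g r"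
  shows "0 \<le> (\<Sum>l<M. g (2 * l) - g (2 * l + 1))" "(\<Sum>l<M. g (2 * l) - g (2 * l + 1)) \<le> g 0 - g (2 * M)"
proof -
  show "0 \<le> (\<Sum>l<M. g (2 * l) - g (2 * l + 1))"
    using anti by (intro sum_nonneg) auto
  show "(\<Sum>l<M. g (2 * l) - g (2 * l + 1)) \<le> g 0 - g (2 * M)"
  proof (induction M)
    case (Suc M)
    have "g (2 * M + 2) \<le> g (2 * M + 1)" by (rule anti) simp
    then show ?case using Suc by simp
  qed simp
qed

text \<open>F differs from E only on the M-half of each cell's time slot, which is cut into \<open>2 M\<close> pieces
  \<^term>\<open>Some r\<close> carrying alternately the increasing diagonals of the lower left and upper right
  quarters of the cell's square; the W-half \<^term>\<open>None\<close> comes after all pieces.\<close>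
locale refined_grid = grid_distribution +
  fixes M :: nat
  assumes M_pos: "0 < M"
begin

definition pieces :: "nat option set" where "pieces = insert None (Some ` {..<2 * M})"

definition piece_len :: "nat \<times> nat \<times> nat \<Rightarrow> real" where "piece_len c = cell_mass c / (4 * real M)"

definition piece_rank :: "nat option \<Rightarrow> nat" where
  "piece_rank x = (case x of None \<Rightarrow> 2 * M | Some r \<Rightarrow> r)"

definition F_offset :: "(nat \<times> nat \<times> nat) \<times> nat option \<Rightarrow> real" where
  "F_offset q = real (piece_rank (snd q)) * piece_len (fst q)"

definition F_start :: "(nat \<times> nat \<times> nat) \<times> nat option \<Rightarrow> real" where
  "F_start q = cell_start (fst q) + F_offset q"

definition F_len :: "(nat \<times> nat \<times> nat) \<times> nat option \<Rightarrow> real" where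
  "F_len q = (case snd q of None \<Rightarrow> cell_mass (fst q) / 2 | Some r \<Rightarrow> piece_len (fst q))"

definition piece_seg :: "nat \<Rightarrow> nat \<Rightarrow> nat \<Rightarrow> seg" where
  "piece_seg i j r = (if even r then lower_seg i j else upper_seg i j)"

definition F_seg :: "(nat \<times> nat \<times> nat) \<times> nat option \<Rightarrow> seg" where
  "F_seg q = (case snd q of None \<Rightarrow> cell_seg (ci (fst q)) (cj (fst q)) False
                         | Some r \<Rightarrow> piece_seg (ci (fst q)) (cj (fst q)) r)"

lemma piece_len_nonneg: "c \<in> cells \<Longrightarrow> 0 \<le> piece_len c"
  using cell_mass_nonneg by (simp add: piece_len_def)

lemma piece_len_total: "4 * real M * piece_len c = cell_mass c"
  using M_pos by (simp add: piece_len_def)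

lemma piece_len_half: "2 * real M * piece_len c = cell_mass c / 2"
  using M_pos by (simp add: piece_len_def)

lemma sum_cells_times_pieces:
  "(\<Sum>q\<in>cells \<times> pieces. f q) = (\<Sum>c\<in>cells. f (c, None) + (\<Sum>r<2 * M. f (c, Some r) :: real))"
proof -
  have "(\<Sum>q\<in>cells \<times> pieces. f q) = (\<Sum>c\<in>cells. \<Sum>x\<in>pieces. f (c, x))"
    by (simp add: sum.cartesian_product)
  moreover have "(\<Sum>x\<in>pieces. f (c, x)) = f (c, None) + (\<Sum>r<2 * M. f (c, Some r))" for c
    by (simp add: pieces_def sum.reindex)
  ultimately show ?thesis by simp
qed

lemma piece_rank_le: "x \<in> pieces \<Longrightarrow> piece_rank x \<le> 2 * M"
  by (auto simp: pieces_def piece_rank_def)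

lemma inj_on_piece_rank: "inj_on piece_rank pieces"
  by (auto simp: inj_on_def pieces_def piece_rank_def)

lemma F_offset_len_le:
  assumes "c \<in> cells" "x \<in> pieces" "x' \<in> pieces" "piece_rank x < piece_rank x'"
  shows "F_offset (c, x) + F_len (c, x) \<le> F_offset (c, x')"
proof -
  obtain r where r: "x = Some r" "r < piece_rank x'"
    using assms(3,4) piece_rank_le[of x'] by (cases x) (auto simp: piece_rank_def)
  have "real (Suc r) * piece_len c \<le> real (piece_rank x') * piece_len c"
    using r(2) piece_len_nonneg[OF assms(1)] by (intro mult_right_mono) auto
  then show ?thesis
    using r by (simp add: F_offset_def F_len_def piece_rank_def algebra_simps)
qed

lemma segment_layout_F: "segment_layout (cells \<times> pieces) F_start F_len F_seg"
  unfolding F_start_def[abs_def]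
proof (rule segment_layout_in_cells)
  fix q :: "(nat \<times> nat \<times> nat) \<times> nat option" assume q: "q \<in> cells \<times> pieces"
  then have c: "fst q \<in> cells" by auto
  then show "fst q \<in> cells" "valid_seg (F_seg q)"
    by (auto simp: F_seg_def piece_seg_def mem_cells_iff split: option.split
        intro: valid_cell_seg valid_lower_seg valid_upper_seg)
  show nonneg: "0 \<le> F_offset q" "0 \<le> F_len q"
    using cell_mass_nonneg[OF c] piece_len_nonneg[OF c] by (auto simp: F_offset_def F_len_def split: option.split)
  have last: "F_offset (fst q, None) + F_len (fst q, None) = cell_mass (fst q)"
    using piece_len_half[of "fst q"] by (simp add: F_offset_def F_len_def piece_rank_def)
  show "F_offset q + F_len q \<le> cell_mass (fst q)"
  proof (cases "snd q")
    case None
    then show ?thesis using last by (metis prod.collapse order_refl)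
  next
    case (Some r)
    then have "piece_rank (snd q) < piece_rank None" "snd q \<in> pieces" "None \<in> pieces"
      using q by (auto simp: pieces_def piece_rank_def)
    from F_offset_len_le[OF c this(2,3,1)] have "F_offset q + F_len q \<le> F_offset (fst q, None)"
      by simp
    then show ?thesis using last cell_mass_nonneg[OF c] by (simp add: F_len_def)
  qed
next
  fix q q' :: "(nat \<times> nat \<times> nat) \<times> nat option"
  assume q: "q \<in> cells \<times> pieces" "q' \<in> cells \<times> pieces" "q \<noteq> q'" "fst q = fst q'"
  obtain c x x' where qq: "q = (c, x)" "q' = (c, x')"
    using \<open>fst q = fst q'\<close> by (metis prod.collapse)
  then have c: "c \<in> cells" and x: "x \<in> pieces" "x' \<in> pieces" and "x \<noteq> x'"
    using q by auto
  then have "piece_rank x \<noteq> piece_rank x'"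
    using inj_on_piece_rank by (auto dest: inj_onD)
  then consider "piece_rank x < piece_rank x'" | "piece_rank x' < piece_rank x"
    by linarith
  then show "{F_offset q..<F_offset q + F_len q} \<inter> {F_offset q'..<F_offset q' + F_len q'} = {}"
  proof cases
    case 1
    from F_offset_len_le[OF c x 1] show ?thesis unfolding qq by auto
  next
    case 2
    from F_offset_len_le[OF c x(2,1) 2] show ?thesis unfolding qq by auto
  qed
next
  have "(\<Sum>q\<in>cells \<times> pieces. F_len q) = (\<Sum>c\<in>cells. cell_mass c / 2 + 2 * real M * piece_len c)"
    by (simp add: sum_cells_times_pieces F_len_def)
  also have "\<dots> = 1"
    by (simp add: piece_len_half sum_cell_mass)
  finally show "(\<Sum>q\<in>cells \<times> pieces. F_len q) = 1" .
qed (simp add: finite_cells pieces_def)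

sublocale F: segment_layout "cells \<times> pieces" F_start F_len F_seg
  by (rule segment_layout_F)

lemma sum_pieces_clamp01:
  "(\<Sum>r<2 * M. piece_len c * (if even r then clamp01 (2 * x) else clamp01 (2 * x - 1))) = cell_mass c / 2 * clamp01 x"
proof -
  have "(\<Sum>r<2 * M. piece_len c * (if even r then clamp01 (2 * x) else clamp01 (2 * x - 1)))
      = real M * piece_len c * (clamp01 (2 * x) + clamp01 (2 * x - 1))"
    by (simp only: sum_lessThan_double) (simp add: algebra_simps)
  also have "\<dots> = cell_mass c / 2 * clamp01 x"
    using piece_len_half[of c] by (simp add: clamp01_double)
  finally show ?thesis .
qed

lemma seg_cdf1_piece_seg:
  "seg_cdf1 (piece_seg i j r) s = (if even r then clamp01 (2 * (real n * s - real i)) else clamp01 (2 * (real n * s - real i) - 1))"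
  and seg_cdf2_piece_seg:
  "seg_cdf2 (piece_seg i j r) s = (if even r then clamp01 (2 * (real n * s - real j)) else clamp01 (2 * (real n * s - real j) - 1))"
  by (simp_all add: piece_seg_def seg_cdf1_lower_seg seg_cdf1_upper_seg seg_cdf2_lower_seg seg_cdf2_upper_seg)

lemma F_cell_margins:
  "F_len (c, None) * seg_cdf1 (F_seg (c, None)) s + (\<Sum>r<2 * M. F_len (c, Some r) * seg_cdf1 (F_seg (c, Some r)) s)
     = cell_mass c * clamp01 (real n * s - real (ci c))"
  "F_len (c, None) * seg_cdf2 (F_seg (c, None)) s + (\<Sum>r<2 * M. F_len (c, Some r) * seg_cdf2 (F_seg (c, Some r)) s)
     = cell_mass c * clamp01 (real n * s - real (cj c))"
  by (simp_all add: F_len_def F_seg_def seg_cdf1_cell_seg seg_cdf2_cell_seg seg_cdf1_piece_seg seg_cdf2_piece_seg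
      sum_pieces_clamp01)

lemma F_margin1: "s \<in> unitI \<Longrightarrow> (\<Sum>q\<in>cells \<times> pieces. F_len q * seg_cdf1 (F_seg q) s) = s"
  unfolding sum_cells_times_pieces F_cell_margins by (rule sum_cell_mass_clamp01_i)

lemma F_margin2: "s \<in> unitI \<Longrightarrow> (\<Sum>q\<in>cells \<times> pieces. F_len q * seg_cdf2 (F_seg q) s) = s"
  unfolding sum_cells_times_pieces F_cell_margins by (rule sum_cell_mass_clamp01_j)

lemma F_copula_in_Cc: "F.copula \<in> Cc"
  by (rule F.copula_in_Cc[OF F_margin1 F_margin2])

end

definition avg_frechet :: "real \<Rightarrow> real \<Rightarrow> real" where
  "avg_frechet s1 s2 = (frechet True s1 s2 + frechet False s1 s2) / 2"

text \<open>At \<open>d1 = d2 = 0\<close> the point is the centre of the cell's square: E sees both conditional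
  margins equal to \<open>1/2\<close>, whereas on the refined pieces they are both \<open>1\<close> or both \<open>0\<close>.\<close>
lemma avg_frechet_refinement_defect:
  fixes d1 d2 :: int
  defines "x1 \<equiv> real_of_int d1 + 1/2" and "x2 \<equiv> real_of_int d2 + 1/2"
  shows "avg_frechet (clamp01 (2 * x1)) (clamp01 (2 * x2)) / 4
       + avg_frechet (clamp01 (2 * x1 - 1)) (clamp01 (2 * x2 - 1)) / 4
       - avg_frechet (clamp01 x1) (clamp01 x2) / 2
       = (if d1 = 0 \<and> d2 = 0 then 1/8 else 0)"
proof -
  have "d1 \<ge> 1 \<or> d1 = 0 \<or> d1 \<le> -1" "d2 \<ge> 1 \<or> d2 = 0 \<or> d2 \<le> -1" by linarith+
  moreover have "d \<ge> 1 \<Longrightarrow> clamp01 (2 * (real_of_int d + 1/2)) = 1 \<and> clamp01 (2 * (real_of_int d + 1/2) - 1) = 1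
      \<and> clamp01 (real_of_int d + 1/2) = 1"
    "d \<le> -1 \<Longrightarrow> clamp01 (2 * (real_of_int d + 1/2)) = 0 \<and> clamp01 (2 * (real_of_int d + 1/2) - 1) = 0
      \<and> clamp01 (real_of_int d + 1/2) = 0" for d :: int
    by (auto simp: clamp01_def)
  ultimately show ?thesis
    unfolding x1_def x2_def by (elim disjE) (simp_all add: avg_frechet_def frechet_def clamp01_def)
qed

context grid_distribution
begin

lemma E_frechet_mixture: "E.frechet_mixture s1 s2 = avg_frechet s1 s2"
proof -
  have "E.frechet_mixture s1 s2 = (\<Sum>c\<in>cells. cell_mass c * avg_frechet s1 s2)"
    unfolding E.frechet_mixture_def sum_cells_times_bool
    by (intro sum.cong refl) (simp add: E_len_def E_seg_def cell_seg_def avg_frechet_def field_simps)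
  then show ?thesis by (simp add: sum_cell_mass flip: sum_distrib_right)
qed

lemma psi_E_copula_1:
  assumes "u1 \<in> {0..1}" "u2 \<in> {0..1}"
  shows "psi E.copula u1 u2 1
       = (\<Sum>c\<in>cells. cell_mass c * avg_frechet (clamp01 (real n * u1 - real (ci c))) (clamp01 (real n * u2 - real (cj c))))"
  using E.psi_copula_eq[OF assms order_refl]
  by (simp add: E_frechet_mixture E.slot_mass_1 sum_cells_times_bool E_len_def E_seg_def
      seg_cdf1_cell_seg seg_cdf2_cell_seg cong: sum.cong)

end

context refined_grid
begin

lemma seg_up_cell_seg: "seg_up (cell_seg i j up) = up"
  by (simp add: cell_seg_def)

lemma seg_up_piece_seg: "seg_up (piece_seg i j r)"
  by (simp add: piece_seg_def lower_seg_def upper_seg_def)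

lemma F_frechet_mixture: "F.frechet_mixture s1 s2 = avg_frechet s1 s2"
proof -
  have "F.frechet_mixture s1 s2 = (\<Sum>c\<in>cells. cell_mass c * avg_frechet s1 s2)"
    unfolding F.frechet_mixture_def sum_cells_times_pieces
    by (intro sum.cong refl)
       (use M_pos in \<open>simp add: F_len_def F_seg_def cell_seg_def seg_up_piece_seg avg_frechet_def piece_len_def field_simps\<close>)
  then show ?thesis by (simp add: sum_cell_mass flip: sum_distrib_right)
qed

lemma psi_F_copula_1:
  assumes "u1 \<in> {0..1}" "u2 \<in> {0..1}"
  defines "x1 c \<equiv> real n * u1 - real (ci c)" and "x2 c \<equiv> real n * u2 - real (cj c)"
  shows "psi F.copula u1 u2 1
       = (\<Sum>c\<in>cells. cell_mass c / 2 * avg_frechet (clamp01 (x1 c)) (clamp01 (x2 c))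
           + cell_mass c / 4 * (avg_frechet (clamp01 (2 * x1 c)) (clamp01 (2 * x2 c))
                               + avg_frechet (clamp01 (2 * x1 c - 1)) (clamp01 (2 * x2 c - 1))))"
proof -
  define A where "A c = avg_frechet (clamp01 (2 * x1 c)) (clamp01 (2 * x2 c))" for c
  define B where "B c = avg_frechet (clamp01 (2 * x1 c - 1)) (clamp01 (2 * x2 c - 1))" for c
  have piece: "avg_frechet (seg_cdf1 (piece_seg (ci c) (cj c) r) u1) (seg_cdf2 (piece_seg (ci c) (cj c) r) u2) * piece_len c
      = piece_len c * (if even r then A c else B c)" for c r
    by (simp add: seg_cdf1_piece_seg seg_cdf2_piece_seg x1_def x2_def A_def B_def)
  have pieces: "(\<Sum>r<2 * M. avg_frechet (seg_cdf1 (piece_seg (ci c) (cj c) r) u1) (seg_cdf2 (piece_seg (ci c) (cj c) r) u2) * piece_len c)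
      = cell_mass c / 4 * (A c + B c)" for c
  proof -
    have "(\<Sum>r<2 * M. piece_len c * (if even r then A c else B c)) = real M * piece_len c * (A c + B c)"
      by (simp only: sum_lessThan_double) (simp add: sum.distrib algebra_simps)
    then show ?thesis
      unfolding piece using piece_len_total[of c] by simp
  qed
  have "psi F.copula u1 u2 1 = (\<Sum>q\<in>cells \<times> pieces. avg_frechet (seg_cdf1 (F_seg q) u1) (seg_cdf2 (F_seg q) u2) * F_len q)"
    using F.psi_copula_eq[OF assms(1,2) order_refl] by (simp add: F_frechet_mixture F.slot_mass_1 cong: sum.cong)
  also have "\<dots> = (\<Sum>c\<in>cells. cell_mass c / 2 * avg_frechet (clamp01 (x1 c)) (clamp01 (x2 c)) + cell_mass c / 4 * (A c + B c))"
    unfolding sum_cells_times_pieces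
    by (intro sum.cong refl) (simp add: F_len_def F_seg_def pieces seg_cdf1_cell_seg seg_cdf2_cell_seg x1_def x2_def)
  finally show ?thesis by (simp add: A_def B_def)
qed

lemma psi_F_minus_psi_E_centre:
  assumes "i0 < n" "j0 < n"
  defines "u1 \<equiv> (2 * real i0 + 1) / (2 * real n)" and "u2 \<equiv> (2 * real j0 + 1) / (2 * real n)"
  shows "psi F.copula u1 u2 1 - psi E.copula u1 u2 1 = (\<Sum>k<n. m i0 j0 k) / 8"
proof -
  have u: "u1 \<in> {0..1}" "u2 \<in> {0..1}"
    using assms real_n_pos by (auto simp: divide_simps)
  have shift: "real n * u1 - real (ci c) = real_of_int (int i0 - int (ci c)) + 1/2"
    "real n * u2 - real (cj c) = real_of_int (int j0 - int (cj c)) + 1/2" for c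
    using real_n_pos by (simp_all add: u1_def u2_def field_simps)
  have cell: "cell_mass c / 2 * a + cell_mass c / 4 * (l + r) - cell_mass c * a = cell_mass c * (l / 4 + r / 4 - a / 2)"
    for c and a l r :: real
    by (simp add: algebra_simps)
  let ?B = "{i0} \<times> {j0} \<times> {..<n}"
  have "psi F.copula u1 u2 1 - psi E.copula u1 u2 1
      = (\<Sum>c\<in>cells. cell_mass c * (if int i0 - int (ci c) = 0 \<and> int j0 - int (cj c) = 0 then 1/8 else 0))"
    unfolding psi_F_copula_1[OF u] psi_E_copula_1[OF u] sum_subtractf[symmetric]
    by (simp only: shift cell avg_frechet_refinement_defect)
  also have "\<dots> = (\<Sum>c\<in>cells. if c \<in> ?B then cell_mass c / 8 else 0)"
    by (intro sum.cong refl) (auto simp: mem_cells_iff)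
  also have "\<dots> = (\<Sum>c\<in>cells \<inter> ?B. cell_mass c / 8)"
    by (simp add: sum.inter_restrict finite_cells)
  also have "cells \<inter> ?B = ?B"
    using assms by (auto simp: mem_cells_iff)
  also have "?B = (\<lambda>k. (i0, j0, k)) ` {..<n}"
    by auto
  also have "(\<Sum>c\<in>(\<lambda>k. (i0, j0, k)) ` {..<n}. cell_mass c / 8) = (\<Sum>k<n. m i0 j0 k) / 8"
    by (simp add: sum.reindex inj_on_def cell_mass_def sum_divide_distrib)
  finally show ?thesis .
qed

lemma seg_cdf_cell_seg_split:
  "2 * seg_cdf (cell_seg i j True) u1 u2 = seg_cdf (piece_seg i j 0) u1 u2 + seg_cdf (piece_seg i j 1) u1 u2"
  by (simp only: seg_cdf_def seg_up_cell_seg seg_up_piece_seg frechet_def if_True seg_cdf1_cell_seg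
      seg_cdf2_cell_seg seg_cdf1_piece_seg seg_cdf2_piece_seg even_zero odd_one if_False min_clamp01_double)

lemma piece_seg_parity: "piece_seg i j (2 * l) = piece_seg i j 0" "piece_seg i j (Suc (2 * l)) = piece_seg i j 1"
  by (simp_all add: piece_seg_def)

definition piece_mass :: "nat \<times> nat \<times> nat \<Rightarrow> real \<Rightarrow> nat \<Rightarrow> real" where
  "piece_mass c v r = max 0 (min (piece_len c) (v - cell_start c - real r * piece_len c))"

lemma cell_slot_masses:
  assumes c: "c \<in> cells"
  shows "E.slot_mass (c, True) v = (\<Sum>l<M. piece_mass c v (2 * l) + piece_mass c v (2 * l + 1))"
    and "E.slot_mass (c, False) v = F.slot_mass (c, None) v"
    and "r < 2 * M \<Longrightarrow> F.slot_mass (c, Some r) v = piece_mass c v r"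
proof -
  have "E.slot_mass (c, True) v = max 0 (min (real (2 * M) * piece_len c) (v - cell_start c))"
    using c piece_len_half[of c] by (simp add: E.slot_mass_eq E_len_def E_start_def)
  also have "\<dots> = (\<Sum>l<M. piece_mass c v (2 * l) + piece_mass c v (2 * l + 1))"
    unfolding piece_mass_def sum_slot_pieces[OF piece_len_nonneg[OF c], symmetric] sum_lessThan_double
    by (simp add: algebra_simps)
  finally show "E.slot_mass (c, True) v = (\<Sum>l<M. piece_mass c v (2 * l) + piece_mass c v (2 * l + 1))" .
  show "E.slot_mass (c, False) v = F.slot_mass (c, None) v"
    using c piece_len_half[of c]
    by (simp add: E.slot_mass_eq F.slot_mass_eq E_len_def E_start_def F_len_def F_start_def F_offset_def
        piece_rank_def pieces_def)
  show "F.slot_mass (c, Some r) v = piece_mass c v r" if "r < 2 * M"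
    using c that by (simp add: F.slot_mass_eq F_len_def F_start_def F_offset_def piece_rank_def pieces_def
        piece_mass_def algebra_simps)
qed

lemma alternating_piece_mass_bounds:
  assumes "c \<in> cells"
  shows "0 \<le> (\<Sum>l<M. piece_mass c v (2 * l) - piece_mass c v (2 * l + 1))"
    "(\<Sum>l<M. piece_mass c v (2 * l) - piece_mass c v (2 * l + 1)) \<le> piece_len c"
proof -
  have pl: "0 \<le> piece_len c" using piece_len_nonneg[OF assms] .
  have anti: "piece_mass c v r' \<le> piece_mass c v r" if "r \<le> r'" for r r'
    using mult_right_mono[OF of_nat_mono[OF that] pl] by (simp add: piece_mass_def max_def min_def)
  have "piece_mass c v 0 \<le> piece_len c" "0 \<le> piece_mass c v (2 * M)"
    using pl by (simp_all add: piece_mass_def)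
  then show "0 \<le> (\<Sum>l<M. piece_mass c v (2 * l) - piece_mass c v (2 * l + 1))"
    "(\<Sum>l<M. piece_mass c v (2 * l) - piece_mass c v (2 * l + 1)) \<le> piece_len c"
    using alternating_sum_antimono_bounds[of "piece_mass c v" M, OF anti] by linarith+
qed

text \<open>Within a cell, E and F differ only in how the mass of the M-half is shared out over time
  between the two quarter squares; up to time \<open>v\<close> this is an alternating sum of piece masses,
  which is at most one piece.\<close>
lemma E_F_cell_diff:
  assumes c: "c \<in> cells"
  shows "\<bar>(seg_cdf (E_seg (c, True)) u1 u2 * E.slot_mass (c, True) v
            + seg_cdf (E_seg (c, False)) u1 u2 * E.slot_mass (c, False) v)
          - (seg_cdf (F_seg (c, None)) u1 u2 * F.slot_mass (c, None) v
            + (\<Sum>r<2 * M. seg_cdf (F_seg (c, Some r)) u1 u2 * F.slot_mass (c, Some r) v))\<bar>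
         \<le> piece_len c / 2"
proof -
  define g where "g = piece_mass c v"
  define Rd where "Rd = seg_cdf (cell_seg (ci c) (cj c) True) u1 u2"
  define Rl where "Rl = seg_cdf (piece_seg (ci c) (cj c) 0) u1 u2"
  define Ru where "Ru = seg_cdf (piece_seg (ci c) (cj c) 1) u1 u2"
  have "(\<Sum>r<2 * M. seg_cdf (F_seg (c, Some r)) u1 u2 * F.slot_mass (c, Some r) v)
      = (\<Sum>l<M. Rl * g (2 * l) + Ru * g (2 * l + 1))"
    by (simp only: sum_lessThan_double F_seg_def option.case snd_conv fst_conv)
       (intro sum.cong refl, simp add: cell_slot_masses(3)[OF c] g_def Rl_def Ru_def piece_seg_parity)
  moreover have "seg_cdf (E_seg (c, True)) u1 u2 = Rd" "seg_cdf (E_seg (c, False)) u1 u2 = seg_cdf (F_seg (c, None)) u1 u2"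
    by (simp_all add: E_seg_def F_seg_def Rd_def)
  ultimately have "(seg_cdf (E_seg (c, True)) u1 u2 * E.slot_mass (c, True) v
            + seg_cdf (E_seg (c, False)) u1 u2 * E.slot_mass (c, False) v)
          - (seg_cdf (F_seg (c, None)) u1 u2 * F.slot_mass (c, None) v
            + (\<Sum>r<2 * M. seg_cdf (F_seg (c, Some r)) u1 u2 * F.slot_mass (c, Some r) v))
      = (\<Sum>l<M. Rd * (g (2 * l) + g (2 * l + 1)) - (Rl * g (2 * l) + Ru * g (2 * l + 1)))"
    by (simp add: cell_slot_masses(1,2)[OF c] g_def sum_distrib_left sum_subtractf)
  also have "\<dots> = (Ru - Rl) / 2 * (\<Sum>l<M. g (2 * l) - g (2 * l + 1))"
  proof -
    have Rd: "Rd = (Rl + Ru) / 2"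
      using seg_cdf_cell_seg_split[of "ci c" "cj c" u1 u2] by (simp add: Rd_def Rl_def Ru_def)
    have termwise: "Rd * (a + b) - (Rl * a + Ru * b) = (Ru - Rl) / 2 * (a - b)" for a b
      unfolding Rd by (simp add: field_simps)
    show ?thesis unfolding termwise sum_distrib_left ..
  qed
  finally have diff: "(seg_cdf (E_seg (c, True)) u1 u2 * E.slot_mass (c, True) v
            + seg_cdf (E_seg (c, False)) u1 u2 * E.slot_mass (c, False) v)
          - (seg_cdf (F_seg (c, None)) u1 u2 * F.slot_mass (c, None) v
            + (\<Sum>r<2 * M. seg_cdf (F_seg (c, Some r)) u1 u2 * F.slot_mass (c, Some r) v))
      = (Ru - Rl) / 2 * (\<Sum>l<M. g (2 * l) - g (2 * l + 1))" .
  have "ci c < n" "cj c < n" using c by (auto simp: mem_cells_iff)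
  then have "\<bar>Ru - Rl\<bar> \<le> 1"
    using seg_cdf_bounds[OF valid_lower_seg, of "ci c" "cj c" u1 u2] seg_cdf_bounds[OF valid_upper_seg, of "ci c" "cj c" u1 u2]
    by (simp add: Rl_def Ru_def piece_seg_def abs_le_iff)
  then have "\<bar>Ru - Rl\<bar> / 2 * (\<Sum>l<M. g (2 * l) - g (2 * l + 1)) \<le> 1 / 2 * piece_len c"
    using alternating_piece_mass_bounds[OF c, of v] unfolding g_def by (intro mult_mono) auto
  then show ?thesis
    unfolding diff using alternating_piece_mass_bounds(1)[OF c, of v] by (simp add: abs_mult g_def)
qed

lemma dinf_E_F_le: "dinf E.copula F.copula \<le> 1 / (8 * real M)"
proof (rule dinf_leI)
  fix u1 u2 v assume "u1 \<in> unitI" "u2 \<in> unitI" "v \<in> unitI"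
  then have v: "v \<le> 1" by (simp add: unitI_def)
  have "\<bar>E.copula u1 u2 v - F.copula u1 u2 v\<bar>
      \<le> (\<Sum>c\<in>cells. \<bar>(seg_cdf (E_seg (c, True)) u1 u2 * E.slot_mass (c, True) v
            + seg_cdf (E_seg (c, False)) u1 u2 * E.slot_mass (c, False) v)
          - (seg_cdf (F_seg (c, None)) u1 u2 * F.slot_mass (c, None) v
            + (\<Sum>r<2 * M. seg_cdf (F_seg (c, Some r)) u1 u2 * F.slot_mass (c, Some r) v))\<bar>)"
    unfolding E.copula_eq_sum[OF v] F.copula_eq_sum[OF v] sum_cells_times_bool sum_cells_times_pieces
      sum_subtractf[symmetric] by (rule sum_abs)
  also have "\<dots> \<le> (\<Sum>c\<in>cells. piece_len c / 2)"
    by (intro sum_mono E_F_cell_diff)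
  also have "\<dots> = 1 / (8 * real M)"
    by (simp add: piece_len_def sum_cell_mass flip: sum_divide_distrib)
  finally show "\<bar>E.copula u1 u2 v - F.copula u1 u2 v\<bar> \<le> 1 / (8 * real M)" .
qed

end

section \<open>Discontinuity of psi on the grid copulas\<close>

lemma (in grid_distribution) exists_column_pos: "\<exists>i0<n. \<exists>j0<n. 0 < (\<Sum>k<n. m i0 j0 k)"
proof -
  have "0 < (\<Sum>j<n. \<Sum>k<n. m 0 j k)"
    using sum_m_jk[of 0] n_pos by simp
  then obtain j0 where "j0 < n" "0 < (\<Sum>k<n. m 0 j0 k)"
    by (metis (lifting) lessThan_iff not_less sum_nonpos)
  then show ?thesis using n_pos by blast
qed

lemma exists_nat_inverse_less: "0 < (d :: real) \<Longrightarrow> \<exists>M>0. c / real M < d"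
proof -
  assume "0 < d"
  obtain M :: nat where "c / d < real M" using reals_Archimedean2 by blast
  then have "c / real (Suc M) < d" using \<open>0 < d\<close> by (simp add: field_simps)
  then show ?thesis by blast
qed

lemma (in grid_distribution) psi_discontinuous_at_E:
  "\<not> (\<forall>e>0. \<exists>d>0. \<forall>C'\<in>Cc. dinf E.copula C' < d \<longrightarrow> dinf (psi E.copula) (psi C') < e)"
proof
  assume continuous: "\<forall>e>0. \<exists>d>0. \<forall>C'\<in>Cc. dinf E.copula C' < d \<longrightarrow> dinf (psi E.copula) (psi C') < e"
  obtain i0 j0 where ij: "i0 < n" "j0 < n" "0 < (\<Sum>k<n. m i0 j0 k)"
    using exists_column_pos by blast
  define e where "e = (\<Sum>k<n. m i0 j0 k) / 8"
  have "0 < e" using ij(3) by (simp add: e_def)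
  then obtain d where "0 < d" and d: "\<forall>C'\<in>Cc. dinf E.copula C' < d \<longrightarrow> dinf (psi E.copula) (psi C') < e"
    using continuous by blast
  obtain M where "0 < M" "1 / 8 / real M < d"
    using exists_nat_inverse_less[OF \<open>0 < d\<close>] by blast
  interpret refined_grid n m M
    by unfold_locales (rule \<open>0 < M\<close>)
  have "dinf E.copula F.copula < d"
    using dinf_E_F_le \<open>1 / 8 / real M < d\<close> by (simp add: field_simps)
  then have less: "dinf (psi E.copula) (psi F.copula) < e"
    using d F_copula_in_Cc by blast
  define u1 where "u1 = (2 * real i0 + 1) / (2 * real n)"
  define u2 where "u2 = (2 * real j0 + 1) / (2 * real n)"
  have u: "u1 \<in> unitI" "u2 \<in> unitI"
    using ij real_n_pos by (auto simp: u1_def u2_def unitI_def divide_simps)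
  have bounded: "\<bar>psi E.copula x y z - psi F.copula x y z\<bar> \<le> 2" if "x \<in> unitI" "y \<in> unitI" "z \<in> unitI" for x y z
  proof -
    have "\<bar>psi E.copula x y z\<bar> \<le> 1" "\<bar>psi F.copula x y z\<bar> \<le> 1"
      using that by (auto simp: unitI_def intro!: E.abs_psi_copula_le_1 F.abs_psi_copula_le_1)
    then show ?thesis by linarith
  qed
  have "\<bar>psi E.copula u1 u2 1 - psi F.copula u1 u2 1\<bar> \<le> dinf (psi E.copula) (psi F.copula)"
    by (rule abs_le_dinf[OF bounded u unitI_0_1(2)])
  moreover have "psi F.copula u1 u2 1 - psi E.copula u1 u2 1 = e"
    unfolding u1_def u2_def e_def by (rule psi_F_minus_psi_E_centre[OF ij(1,2)])
  ultimately show False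
    using less by linarith
qed

lemma grid_copulas_dense:
  assumes "C \<in> Cc" "0 < e"
  shows "\<exists>n m. grid_distribution n m \<and> dinf C (grid_copula n m) < e"
proof -
  have C: "copula3 C" using assms(1) by (simp add: Cc_def)
  obtain n where "0 < n" "3 / real n < e"
    using exists_nat_inverse_less[OF assms(2)] by blast
  then have "dinf C (grid_copula n (grid_cell_mass C n)) < e"
    using dinf_grid_copula_le[OF C \<open>0 < n\<close>] by linarith
  then show ?thesis
    using grid_distribution_grid_cell_mass[OF C \<open>0 < n\<close>] by blast
qed

theorem corollary6p2:
  shows "\<exists>D \<subseteq> Cc.
           (\<forall>C\<in>Cc. \<forall>e>0. \<exists>E\<in>D. dinf C E < e) \<and>
           (\<forall>C\<in>D. \<not> (\<forall>e>0. \<exists>d>0. \<forall>C'\<in>Cc. dinf C C' < d \<longrightarrow> dinf (psi C) (psi C') < e))"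
proof (intro exI conjI ballI allI impI)
  let ?D = "{grid_copula n m | n m. grid_distribution n m}"
  show "?D \<subseteq> Cc"
    by (auto simp: grid_distribution.grid_copula_eq grid_distribution.E_copula_in_Cc)
  show "\<exists>E\<in>?D. dinf C E < e" if "C \<in> Cc" "0 < e" for C e
    using grid_copulas_dense[OF that] by blast
  show "\<not> (\<forall>e>0. \<exists>d>0. \<forall>C'\<in>Cc. dinf C C' < d \<longrightarrow> dinf (psi C) (psi C') < e)" if "C \<in> ?D" for C
  proof -
    from that obtain n m where grid: "grid_distribution n m" and "C = grid_copula n m" by blast
    then show ?thesis
      using grid_distribution.psi_discontinuous_at_E[OF grid] by (simp add: grid_distribution.grid_copula_eq[OF grid])
  qed
qed

end
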